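(* Let $\mathcal{C}$ be a category and $W$ a class of morphisms of $\mathcal{C}$ containing all identities, and regard $(N\mathcal{C}, W)$ as a marked simplicial set (the nerve $N\mathcal{C}$ marked at the $1$-simplices lying in $W$). (1) $(\mathcal{C}, W)$ satisfies proper calculus of left fractions if and only if $(N\mathcal{C}, W)$ satisfies calculus of left fractions (CLF). (2) $(\mathcal{C}, W)$ satisfies proper calculus of right fractions if and only if $(N\mathcal{C}, W)$ satisfies calculus of right fractions (CRF).
   Context: A marked simplicial set is a pair $(X,W)$ where $X$ is a simplicial set and $W \subseteq X_1$ contains all degenerate $1$-simplices; marked maps preserve marked $1$-simplices. Posets are regarded as simplicial sets via the nerve; $[n]=\{0<1<\dots<n\}$. Marked posets $\mathrm{L}^n_k$, $\mathrm{LJ}^n_k$, $\mathrm{R}^n_k$, $\mathrm{RJ}^n_k$: for $n\ge 0$, $0\le k\le n$, $\mathrm{L}^n_k$ is the nerve of the poset of subsets $A\subseteq[n]$ with $k\in A$, ordered by inclusion, where a $1$-simplex $A_0\subseteq A_1$ is marked iff $\max A_0=\max A_1$; $\mathrm{LJ}^n_k\subseteq \mathrm{L}^n_k$ is the maximal simplicial subset not containing the vertex $[n]$ (with the induced marking). $\mathrm{R}^n_k$ is the nerve of the opposite poset (same subsets, arrows $A_0\to A_1$ when $A_0\supseteq A_1$), where $A_0\supseteq A_1$ is marked iff $\min A_0=\min A_1$; $\mathrm{RJ}^n_k\subseteq\mathrm{R}^n_k$ is the maximal simplicial subset omitting the vertex $[n]$. A marking $W$ on $X$ is weakly closed under composition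 if every map $\Lambda^2_1\to X$ whose two $1$-simplices are marked extends to a $2$-simplex $\Delta^2\to X$ all of whose edges are marked. A marked quasicategory $(\mathcal{C},W)$ satisfies CLF if $W$ is weakly closed under composition and $(\mathcal{C},W)$ has the right lifting property (in marked simplicial sets) against all inclusions $\mathrm{LJ}^n_k\hookrightarrow\mathrm{L}^n_k$ with $n\ge2$, $0<k\le n$; it satisfies CRF if $W$ is weakly closed under composition and it has the right lifting property against all $\mathrm{RJ}^n_k\hookrightarrow\mathrm{R}^n_k$ with $n\ge 2$, $0\le k<n$. A marked category $(\mathcal{C},W)$ satisfies proper calculus of left fractions if: (i) $W$ is closed under composition and contains identities; (ii') every span $f\colon X\to Y$, $w\colon X\to X'$ with $w\in W$ can be completed to a commutative square $f'w=w'f$ with $f'\colon X'\to Y'$, $w'\colon Y\to Y'$, $w'\in W$, and moreover if $f\in W$ then $f'\in W$; (iii) for parallel $f,g\colon X\to Y$, if there is $w\colon X'\to X$ in $W$ with $fw=gw$ then there is $v\colon Y\to Y'$ in $W$ with $vf=vg$. It satisfies proper calculus of right fractions if $(\mathcal{C}^{\mathrm{op}},W)$ satisfies proper calculus of left fractions. *)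

theory Defs
  imports Main
begin

record ('o, 'a) category =
  Obj  :: "'o set"
  Arr  :: "'a set"
  Dom  :: "'a \<Rightarrow> 'o"
  Cod  :: "'a \<Rightarrow> 'o"
  Id   :: "'o \<Rightarrow> 'a"
  Comp :: "'a \<Rightarrow> 'a \<Rightarrow> 'a"   (* Comp g f = g o f, defined when Cod f = Dom g *)

definition category :: "('o, 'a) category \<Rightarrow> bool" where
  "category C \<longleftrightarrow>
     (\<forall>f\<in>Arr C. Dom C f \<in> Obj C \<and> Cod C f \<in> Obj C) \<and>
     (\<forall>x\<in>Obj C. Id C x \<in> Arr C \<and> Dom C (Id C x) = x \<and> Cod C (Id C x) = x) \<and>
     (\<forall>f\<in>Arr C. \<forall>g\<in>Arr C. Cod C f = Dom C g \<longrightarrow>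
        Comp C g f \<in> Arr C \<and> Dom C (Comp C g f) = Dom C f \<and> Cod C (Comp C g f) = Cod C g) \<and>
     (\<forall>f\<in>Arr C. Comp C f (Id C (Dom C f)) = f \<and> Comp C (Id C (Cod C f)) f = f) \<and>
     (\<forall>f\<in>Arr C. \<forall>g\<in>Arr C. \<forall>h\<in>Arr C. Cod C f = Dom C g \<longrightarrow> Cod C g = Dom C h \<longrightarrow>
        Comp C h (Comp C g f) = Comp C (Comp C h g) f)"

definition op_cat :: "('o, 'a) category \<Rightarrow> ('o, 'a) category" where
  "op_cat C = \<lparr>Obj = Obj C, Arr = Arr C, Dom = Cod C, Cod = Dom C, Id = Id C,
               Comp = (\<lambda>g f. Comp C f g)\<rparr>"

definition proper_left_fractions :: "('o, 'a) category \<Rightarrow> 'a set \<Rightarrow> bool" where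
  "proper_left_fractions C W \<longleftrightarrow>
     \<comment> \<open>(i)\<close>
     (\<forall>x\<in>Obj C. Id C x \<in> W) \<and>
     (\<forall>u\<in>W. \<forall>v\<in>W. Cod C u = Dom C v \<longrightarrow> Comp C v u \<in> W) \<and>
     \<comment> \<open>(ii')\<close>
     (\<forall>f\<in>Arr C. \<forall>w\<in>W. Dom C f = Dom C w \<longrightarrow>
        (\<exists>f' w'. f' \<in> Arr C \<and> w' \<in> W \<and> Dom C f' = Cod C w \<and> Dom C w' = Cod C f \<and>
                 Cod C f' = Cod C w' \<and> Comp C f' w = Comp C w' f \<and> (f \<in> W \<longrightarrow> f' \<in> W))) \<and>
     \<comment> \<open>(iii)\<close>
     (\<forall>f\<in>Arr C. \<forall>g\<in>Arr C. Dom C f = Dom C g \<longrightarrow> Cod C f = Cod C g \<longrightarrow>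
        (\<exists>w\<in>W. Cod C w = Dom C f \<and> Comp C f w = Comp C g w) \<longrightarrow>
        (\<exists>v\<in>W. Dom C v = Cod C f \<and> Comp C v f = Comp C v g))"

definition proper_right_fractions :: "('o, 'a) category \<Rightarrow> 'a set \<Rightarrow> bool" where
  "proper_right_fractions C W \<longleftrightarrow> proper_left_fractions (op_cat C) W"

text \<open>Simp X n is the set of n-simplices; Act X m n th x is the action of a monotone map
  th : [m] -> [n] on an n-simplex x, giving an m-simplex.\<close>

record 'x sset =
  Simp :: "nat \<Rightarrow> 'x set"
  Act  :: "nat \<Rightarrow> nat \<Rightarrow> (nat \<Rightarrow> nat) \<Rightarrow> 'x \<Rightarrow> 'x"

definition mono_op :: "nat \<Rightarrow> nat \<Rightarrow> (nat \<Rightarrow> nat) \<Rightarrow> bool" where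
  "mono_op m n th \<longleftrightarrow> (\<forall>i j. i \<le> j \<longrightarrow> j \<le> m \<longrightarrow> th i \<le> th j) \<and> (\<forall>i\<le>m. th i \<le> n)"

definition smap :: "'x sset \<Rightarrow> 'y sset \<Rightarrow> (nat \<Rightarrow> 'x \<Rightarrow> 'y) \<Rightarrow> bool" where
  "smap X Y f \<longleftrightarrow>
     (\<forall>n x. x \<in> Simp X n \<longrightarrow> f n x \<in> Simp Y n) \<and>
     (\<forall>m n th x. mono_op m n th \<longrightarrow> x \<in> Simp X n \<longrightarrow>
        f m (Act X m n th x) = Act Y m n th (f n x))"

definition marked_map :: "'x sset \<Rightarrow> 'x set \<Rightarrow> 'y sset \<Rightarrow> 'y set \<Rightarrow> (nat \<Rightarrow> 'x \<Rightarrow> 'y) \<Rightarrow> bool" where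
  "marked_map X WX Y WY f \<longleftrightarrow> smap X Y f \<and> (\<forall>x\<in>WX. f 1 x \<in> WY)"

text \<open>Right lifting property of (X, WX) against the inclusion of a marked simplicial
  subset (A, WA) into (B, WB).\<close>
definition rlp :: "'y sset \<Rightarrow> 'y set \<Rightarrow> 'x sset \<Rightarrow> 'x set \<Rightarrow> 'x sset \<Rightarrow> 'x set \<Rightarrow> bool" where
  "rlp X WX A WA B WB \<longleftrightarrow>
     (\<forall>f. marked_map A WA X WX f \<longrightarrow>
        (\<exists>g. marked_map B WB X WX g \<and> (\<forall>n a. a \<in> Simp A n \<longrightarrow> g n a = f n a)))"

definition pnerve :: "'p set \<Rightarrow> ('p \<Rightarrow> 'p \<Rightarrow> bool) \<Rightarrow> (nat \<Rightarrow> 'p) sset" where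
  "pnerve P le = \<lparr>Simp = (\<lambda>n. {c. (\<forall>i\<le>n. c i \<in> P) \<and>
                                   (\<forall>i j. i \<le> j \<longrightarrow> j \<le> n \<longrightarrow> le (c i) (c j)) \<and>
                                   (\<forall>i>n. c i = undefined)}),
                  Act = (\<lambda>m n th c. \<lambda>i. if i \<le> m then c (th i) else undefined)\<rparr>"

definition subsset :: "'x sset \<Rightarrow> (nat \<Rightarrow> 'x set) \<Rightarrow> 'x sset" where
  "subsset X S = X\<lparr>Simp := (\<lambda>n. Simp X n \<inter> S n)\<rparr>"

definition pmark :: "(nat \<Rightarrow> 'p) sset \<Rightarrow> ('p \<Rightarrow> 'p \<Rightarrow> bool) \<Rightarrow> (nat \<Rightarrow> 'p) set" where
  "pmark X Q = {c \<in> Simp X 1. Q (c 0) (c 1)}"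

text \<open>Nerve of a category: n-simplices are functors [n] -> C, encoded by
  sigma i j = image of the arrow i <= j.\<close>
definition cnerve :: "('o, 'a) category \<Rightarrow> (nat \<Rightarrow> nat \<Rightarrow> 'a) sset" where
  "cnerve C = \<lparr>Simp = (\<lambda>n. {s.
       (\<forall>i j. i \<le> j \<longrightarrow> j \<le> n \<longrightarrow> s i j \<in> Arr C \<and>
              Dom C (s i j) = Dom C (s i i) \<and> Cod C (s i j) = Dom C (s j j)) \<and>
       (\<forall>i\<le>n. s i i = Id C (Dom C (s i i))) \<and>
       (\<forall>i j k. i \<le> j \<longrightarrow> j \<le> k \<longrightarrow> k \<le> n \<longrightarrow> Comp C (s j k) (s i j) = s i k) \<and>
       (\<forall>i j. \<not> (i \<le> j \<and> j \<le> n) \<longrightarrow> s i j = undefined)}),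
     Act = (\<lambda>m n th s. \<lambda>i j. if i \<le> j \<and> j \<le> m then s (th i) (th j) else undefined)\<rparr>"

definition nmark :: "('o, 'a) category \<Rightarrow> 'a set \<Rightarrow> (nat \<Rightarrow> nat \<Rightarrow> 'a) set" where
  "nmark C W = {s \<in> Simp (cnerve C) 1. s 0 1 \<in> W}"

definition Lposet :: "nat \<Rightarrow> nat \<Rightarrow> nat set set" where
  "Lposet n k = {A. A \<subseteq> {0..n} \<and> k \<in> A}"

definition L :: "nat \<Rightarrow> nat \<Rightarrow> (nat \<Rightarrow> nat set) sset" where
  "L n k = pnerve (Lposet n k) (\<subseteq>)"
definition L_mark :: "nat \<Rightarrow> nat \<Rightarrow> (nat \<Rightarrow> nat set) set" where
  "L_mark n k = pmark (L n k) (\<lambda>A0 A1. Max A0 = Max A1)"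
definition LJ :: "nat \<Rightarrow> nat \<Rightarrow> (nat \<Rightarrow> nat set) sset" where
  "LJ n k = subsset (L n k) (\<lambda>d. {c. \<forall>i\<le>d. c i \<noteq> {0..n}})"
definition LJ_mark :: "nat \<Rightarrow> nat \<Rightarrow> (nat \<Rightarrow> nat set) set" where
  "LJ_mark n k = L_mark n k \<inter> Simp (LJ n k) 1"

definition R :: "nat \<Rightarrow> nat \<Rightarrow> (nat \<Rightarrow> nat set) sset" where
  "R n k = pnerve (Lposet n k) (\<supseteq>)"
definition R_mark :: "nat \<Rightarrow> nat \<Rightarrow> (nat \<Rightarrow> nat set) set" where
  "R_mark n k = pmark (R n k) (\<lambda>A0 A1. Min A0 = Min A1)"
definition RJ :: "nat \<Rightarrow> nat \<Rightarrow> (nat \<Rightarrow> nat set) sset" where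
  "RJ n k = subsset (R n k) (\<lambda>d. {c. \<forall>i\<le>d. c i \<noteq> {0..n}})"
definition RJ_mark :: "nat \<Rightarrow> nat \<Rightarrow> (nat \<Rightarrow> nat set) set" where
  "RJ_mark n k = R_mark n k \<inter> Simp (RJ n k) 1"

definition Delta2 :: "(nat \<Rightarrow> nat) sset" where
  "Delta2 = pnerve {0, 1, 2} (\<le>)"
definition Horn21 :: "(nat \<Rightarrow> nat) sset" where
  "Horn21 = subsset Delta2 (\<lambda>d. {c. (\<forall>i\<le>d. c i \<in> {0, 1}) \<or> (\<forall>i\<le>d. c i \<in> {1, 2})})"

definition weakly_closed :: "'y sset \<Rightarrow> 'y set \<Rightarrow> bool" where
  "weakly_closed X W \<longleftrightarrow> rlp X W Horn21 (Simp Horn21 1) Delta2 (Simp Delta2 1)"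

definition CLF :: "'y sset \<Rightarrow> 'y set \<Rightarrow> bool" where
  "CLF X W \<longleftrightarrow> weakly_closed X W \<and>
     (\<forall>n k. 2 \<le> n \<longrightarrow> 0 < k \<longrightarrow> k \<le> n \<longrightarrow> rlp X W (LJ n k) (LJ_mark n k) (L n k) (L_mark n k))"

definition CRF :: "'y sset \<Rightarrow> 'y set \<Rightarrow> bool" where
  "CRF X W \<longleftrightarrow> weakly_closed X W \<and>
     (\<forall>n k. 2 \<le> n \<longrightarrow> k < n \<longrightarrow> rlp X W (RJ n k) (RJ_mark n k) (R n k) (R_mark n k))"

end

(* A marked functor from LJ^n_k into C extends to L^n_k exactly when it has a cocone whose legs
   out of the sets containing n lie in W, and lifting against the horn is closure of W under
   composition.  Given a proper calculus of left fractions, such a cocone is built one maximal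
   element at a time: the new leg comes from an Ore square, and the ambiguity it creates is
   removed by cancellation, propagated along zigzags of marked arrows and made uniform by
   amalgamating finitely many arrows of W through further Ore squares.  Conversely, lifting
   against L^2_1 and L^2_2 produces the Ore squares, the properness clause included, and lifting
   against L^3_1 produces the cancelling arrows.  The statement about right fractions is the one
   about left fractions for the opposite category, since a \<mapsto> n - a turns R^n_k into the
   opposite of L^n_{n-k}. *)

theory Submission
  imports Defs
begin

locale cat =
  fixes C :: "('o, 'a) category"
  assumes category: "category C"
begin

lemma Dom_in_Obj: "f \<in> Arr C \<Longrightarrow> Dom C f \<in> Obj C"
  using category unfolding category_def by blast

lemma Cod_in_Obj: "f \<in> Arr C \<Longrightarrow> Cod C f \<in> Obj C"
  using category unfolding category_def by blast

lemma Id_in_Arr [simp]: "x \<in> Obj C \<Longrightarrow> Id C x \<in> Arr C"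
  and Dom_Id [simp]: "x \<in> Obj C \<Longrightarrow> Dom C (Id C x) = x"
  and Cod_Id [simp]: "x \<in> Obj C \<Longrightarrow> Cod C (Id C x) = x"
  using category unfolding category_def by blast+

lemma Comp_in_Arr [simp]: "f \<in> Arr C \<Longrightarrow> g \<in> Arr C \<Longrightarrow> Cod C f = Dom C g \<Longrightarrow> Comp C g f \<in> Arr C"
  and Dom_Comp [simp]: "f \<in> Arr C \<Longrightarrow> g \<in> Arr C \<Longrightarrow> Cod C f = Dom C g \<Longrightarrow> Dom C (Comp C g f) = Dom C f"
  and Cod_Comp [simp]: "f \<in> Arr C \<Longrightarrow> g \<in> Arr C \<Longrightarrow> Cod C f = Dom C g \<Longrightarrow> Cod C (Comp C g f) = Cod C g"
  using category unfolding category_def by blast+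

lemma Comp_Id_right: "f \<in> Arr C \<Longrightarrow> x = Dom C f \<Longrightarrow> Comp C f (Id C x) = f"
  and Comp_Id_left: "f \<in> Arr C \<Longrightarrow> x = Cod C f \<Longrightarrow> Comp C (Id C x) f = f"
  using category unfolding category_def by blast+

lemma Comp_assoc:
  "f \<in> Arr C \<Longrightarrow> g \<in> Arr C \<Longrightarrow> h \<in> Arr C \<Longrightarrow> Cod C f = Dom C g \<Longrightarrow> Cod C g = Dom C h \<Longrightarrow>
   Comp C (Comp C h g) f = Comp C h (Comp C g f)"
  using category unfolding category_def by metis

end

text \<open>A functor is given by its values on comparable pairs; the object at A is the domain of the
  identity G A A.\<close>

definition poset_functor :: "('o, 'a) category \<Rightarrow> 'p set \<Rightarrow> ('p \<Rightarrow> 'p \<Rightarrow> bool) \<Rightarrow> ('p \<Rightarrow> 'p \<Rightarrow> 'a) \<Rightarrow> bool" where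
  "poset_functor C P le G \<longleftrightarrow>
     (\<forall>A\<in>P. G A A \<in> Arr C \<and> G A A = Id C (Dom C (G A A))) \<and>
     (\<forall>A\<in>P. \<forall>B\<in>P. le A B \<longrightarrow>
        G A B \<in> Arr C \<and> Dom C (G A B) = Dom C (G A A) \<and> Cod C (G A B) = Dom C (G B B)) \<and>
     (\<forall>A\<in>P. \<forall>B\<in>P. \<forall>D\<in>P. le A B \<longrightarrow> le B D \<longrightarrow> le A D \<longrightarrow> Comp C (G B D) (G A B) = G A D)"

definition sends_marked :: "'a set \<Rightarrow> 'p set \<Rightarrow> ('p \<Rightarrow> 'p \<Rightarrow> bool) \<Rightarrow> ('p \<Rightarrow> 'p \<Rightarrow> bool) \<Rightarrow> ('p \<Rightarrow> 'p \<Rightarrow> 'a) \<Rightarrow> bool" where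
  "sends_marked W P le Q G \<longleftrightarrow> (\<forall>A\<in>P. \<forall>B\<in>P. le A B \<longrightarrow> Q A B \<longrightarrow> G A B \<in> W)"

definition functors_extend ::
  "('o, 'a) category \<Rightarrow> 'a set \<Rightarrow> 'p set \<Rightarrow> ('p \<Rightarrow> 'p \<Rightarrow> bool) \<Rightarrow> 'p set \<Rightarrow> ('p \<Rightarrow> 'p \<Rightarrow> bool) \<Rightarrow> ('p \<Rightarrow> 'p \<Rightarrow> bool) \<Rightarrow> bool" where
  "functors_extend C W P' le' P le Q \<longleftrightarrow>
     (\<forall>G. poset_functor C P' le' G \<and> sends_marked W P' le' Q G \<longrightarrow>
        (\<exists>G'. poset_functor C P le G' \<and> sends_marked W P le Q G' \<and>
              (\<forall>A\<in>P'. \<forall>B\<in>P'. le' A B \<longrightarrow> G' A B = G A B)))"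

lemma functors_extendD:
  assumes "functors_extend C W P' le' P le Q" "poset_functor C P' le' G" "sends_marked W P' le' Q G"
  obtains G' where "poset_functor C P le G'" "sends_marked W P le Q G'"
    "\<And>A B. A \<in> P' \<Longrightarrow> B \<in> P' \<Longrightarrow> le' A B \<Longrightarrow> G' A B = G A B"
  using assms unfolding functors_extend_def by blast

context
  fixes C :: "('o, 'a) category" and P :: "'p set" and le G
  assumes G: "poset_functor C P le G"
begin

lemma poset_functor_Id_in_Arr: "A \<in> P \<Longrightarrow> G A A \<in> Arr C"
  and poset_functor_Id: "A \<in> P \<Longrightarrow> G A A = Id C (Dom C (G A A))"
  using G unfolding poset_functor_def by blast+

lemma poset_functor_in_Arr: "A \<in> P \<Longrightarrow> B \<in> P \<Longrightarrow> le A B \<Longrightarrow> G A B \<in> Arr C"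
  and poset_functor_Dom: "A \<in> P \<Longrightarrow> B \<in> P \<Longrightarrow> le A B \<Longrightarrow> Dom C (G A B) = Dom C (G A A)"
  and poset_functor_Cod: "A \<in> P \<Longrightarrow> B \<in> P \<Longrightarrow> le A B \<Longrightarrow> Cod C (G A B) = Dom C (G B B)"
  using G unfolding poset_functor_def by blast+

lemma poset_functor_Comp:
  "A \<in> P \<Longrightarrow> B \<in> P \<Longrightarrow> D \<in> P \<Longrightarrow> le A B \<Longrightarrow> le B D \<Longrightarrow> le A D \<Longrightarrow> Comp C (G B D) (G A B) = G A D"
  using G unfolding poset_functor_def by blast

end

lemma poset_functor_pullback:
  assumes "poset_functor C P0 le0 H" "\<forall>A\<in>P. c A \<in> P0" "\<forall>A\<in>P. \<forall>B\<in>P. le A B \<longrightarrow> le0 (c A) (c B)"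
  shows "poset_functor C P le (\<lambda>A B. H (c A) (c B))"
  using assms unfolding poset_functor_def by blast

lemma sends_marked_pullback:
  assumes "sends_marked W P0 le0 Q0 H" "\<forall>A\<in>P. c A \<in> P0" "\<forall>A\<in>P. \<forall>B\<in>P. le A B \<longrightarrow> le0 (c A) (c B)"
    and "\<forall>A\<in>P. \<forall>B\<in>P. Q A B \<longrightarrow> Q0 (c A) (c B)"
  shows "sends_marked W P le Q (\<lambda>A B. H (c A) (c B))"
  using assms unfolding sends_marked_def by blast

lemma poset_functor_subset: "poset_functor C P le G \<Longrightarrow> P0 \<subseteq> P \<Longrightarrow> poset_functor C P0 le G"
  unfolding poset_functor_def by blast

context cat
begin

lemma poset_functor_no_composites:
  assumes short: "\<And>x y z. x \<in> P \<Longrightarrow> y \<in> P \<Longrightarrow> z \<in> P \<Longrightarrow> le x y \<Longrightarrow> le y z \<Longrightarrow> x = y \<or> y = z"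
    and obj: "\<And>x. x \<in> P \<Longrightarrow> ob x \<in> Obj C"
    and diag: "\<And>x. x \<in> P \<Longrightarrow> G x x = Id C (ob x)"
    and arr: "\<And>x y. x \<in> P \<Longrightarrow> y \<in> P \<Longrightarrow> le x y \<Longrightarrow>
                G x y \<in> Arr C \<and> Dom C (G x y) = ob x \<and> Cod C (G x y) = ob y"
  shows "poset_functor C P le G"
  unfolding poset_functor_def
proof (intro conjI ballI impI)
  fix x y z assume xyz: "x \<in> P" "y \<in> P" "z \<in> P" and "le x y" "le y z" "le x z"
  with short[OF xyz] arr[of x z] show "Comp C (G y z) (G x y) = G x z"
    by (auto simp: diag Comp_Id_right Comp_Id_left)
qed (use obj diag arr in auto)

end

section \<open>Lifting properties as extension problems for functors\<close>

definition edge :: "'p \<Rightarrow> 'p \<Rightarrow> nat \<Rightarrow> 'p" where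
  "edge A B = (\<lambda>i. if i = 0 then A else if i = 1 then B else undefined)"

definition triangle :: "'p \<Rightarrow> 'p \<Rightarrow> 'p \<Rightarrow> nat \<Rightarrow> 'p" where
  "triangle A B D = (\<lambda>i. if i = 0 then A else if i = 1 then B else if i = 2 then D else undefined)"

lemma edge_simps [simp]: "edge A B 0 = A" "edge A B (Suc 0) = B"
  and triangle_simps [simp]: "triangle A B D 0 = A" "triangle A B D (Suc 0) = B" "triangle A B D 2 = D"
  by (simp_all add: edge_def triangle_def)

text \<open>A simplicial map N(P) \<rightarrow> N(C) is determined by its values on edges.\<close>

definition edge_value :: "(nat \<Rightarrow> (nat \<Rightarrow> 'p) \<Rightarrow> (nat \<Rightarrow> nat \<Rightarrow> 'a)) \<Rightarrow> 'p \<Rightarrow> 'p \<Rightarrow> 'a" where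
  "edge_value f A B = f 1 (edge A B) 0 1"

definition nerve_map :: "('p \<Rightarrow> 'p \<Rightarrow> 'a) \<Rightarrow> nat \<Rightarrow> (nat \<Rightarrow> 'p) \<Rightarrow> (nat \<Rightarrow> nat \<Rightarrow> 'a)" where
  "nerve_map G d c = (\<lambda>i j. if i \<le> j \<and> j \<le> d then G (c i) (c j) else undefined)"

lemma edge_value_nerve_map [simp]: "edge_value (nerve_map G) = G"
  by (intro ext) (simp add: edge_value_def nerve_map_def)

lemma Simp_pnerve: "c \<in> Simp (pnerve P le) d \<longleftrightarrow>
    (\<forall>i\<le>d. c i \<in> P) \<and> (\<forall>i j. i \<le> j \<longrightarrow> j \<le> d \<longrightarrow> le (c i) (c j)) \<and> (\<forall>i>d. c i = undefined)"
  by (simp add: pnerve_def)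

lemma Simp_cnerve: "s \<in> Simp (cnerve C) n \<longleftrightarrow>
    (\<forall>i j. i \<le> j \<longrightarrow> j \<le> n \<longrightarrow> s i j \<in> Arr C \<and>
       Dom C (s i j) = Dom C (s i i) \<and> Cod C (s i j) = Dom C (s j j)) \<and>
    (\<forall>i\<le>n. s i i = Id C (Dom C (s i i))) \<and>
    (\<forall>i j k. i \<le> j \<longrightarrow> j \<le> k \<longrightarrow> k \<le> n \<longrightarrow> Comp C (s j k) (s i j) = s i k) \<and>
    (\<forall>i j. \<not> (i \<le> j \<and> j \<le> n) \<longrightarrow> s i j = undefined)"
  by (simp add: cnerve_def)

lemma cnerve_in_Arr: "s \<in> Simp (cnerve C) n \<Longrightarrow> i \<le> j \<Longrightarrow> j \<le> n \<Longrightarrow>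
    s i j \<in> Arr C \<and> Dom C (s i j) = Dom C (s i i) \<and> Cod C (s i j) = Dom C (s j j)"
  and cnerve_Id: "s \<in> Simp (cnerve C) n \<Longrightarrow> i \<le> n \<Longrightarrow> s i i = Id C (Dom C (s i i))"
  and cnerve_Comp: "s \<in> Simp (cnerve C) n \<Longrightarrow> i \<le> j \<Longrightarrow> j \<le> k \<Longrightarrow> k \<le> n \<Longrightarrow>
    Comp C (s j k) (s i j) = s i k"
  and cnerve_undefined: "s \<in> Simp (cnerve C) n \<Longrightarrow> \<not> (i \<le> j \<and> j \<le> n) \<Longrightarrow> s i j = undefined"
  unfolding Simp_cnerve by blast+

lemma edge_in_pnerve: "A \<in> P \<Longrightarrow> B \<in> P \<Longrightarrow> le A A \<Longrightarrow> le A B \<Longrightarrow> le B B \<Longrightarrow> edge A B \<in> Simp (pnerve P le) 1"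
  unfolding Simp_pnerve edge_def by (auto simp: le_Suc_eq)

lemma triangle_in_pnerve:
  "A \<in> P \<Longrightarrow> B \<in> P \<Longrightarrow> D \<in> P \<Longrightarrow> \<forall>X\<in>P. le X X \<Longrightarrow> le A B \<Longrightarrow> le B D \<Longrightarrow> le A D \<Longrightarrow>
   triangle A B D \<in> Simp (pnerve P le) 2"
  unfolding Simp_pnerve triangle_def by (auto simp: le_Suc_eq numeral_2_eq_2)

lemma smap_pnerve_entry:
  assumes f: "smap (pnerve P le) (cnerve C) f" and c: "c \<in> Simp (pnerve P le) d"
    and ij: "i \<le> j" "j \<le> d"
  shows "f d c i j = edge_value f (c i) (c j)"
proof -
  define th where "th = (\<lambda>x::nat. if x = 0 then i else j)"
  have "mono_op 1 d th" unfolding mono_op_def th_def using ij by auto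
  with f c have "f 1 (Act (pnerve P le) 1 d th c) = Act (cnerve C) 1 d th (f d c)"
    unfolding smap_def by blast
  moreover have "Act (pnerve P le) 1 d th c = edge (c i) (c j)"
    unfolding pnerve_def edge_def th_def by (rule ext) auto
  ultimately show ?thesis unfolding edge_value_def cnerve_def th_def by simp
qed

lemma smap_pnerve_eq_nerve_map:
  assumes f: "smap (pnerve P le) (cnerve C) f" and c: "c \<in> Simp (pnerve P le) d"
  shows "f d c = nerve_map (edge_value f) d c"
proof (intro ext)
  fix i j
  have "f d c \<in> Simp (cnerve C) d" using f c unfolding smap_def by blast
  then show "f d c i j = nerve_map (edge_value f) d c i j"
    using smap_pnerve_entry[OF f c, of i j] cnerve_undefined[of "f d c" C d i j]
    unfolding nerve_map_def by auto
qed

lemma poset_functor_edge_value: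
  assumes f: "smap (pnerve P le) (cnerve C) f" and refl: "\<forall>A\<in>P. le A A"
  shows "poset_functor C P le (edge_value f)"
  unfolding poset_functor_def
proof (intro conjI ballI impI)
  fix A B assume A: "A \<in> P" and B: "B \<in> P" and AB: "le A B"
  have e: "edge A B \<in> Simp (pnerve P le) 1" using edge_in_pnerve[OF A B] refl A B AB by blast
  then have "f 1 (edge A B) \<in> Simp (cnerve C) 1" using f unfolding smap_def by blast
  from cnerve_in_Arr[OF this, of 0 1]
  show "edge_value f A B \<in> Arr C" "Dom C (edge_value f A B) = Dom C (edge_value f A A)"
    "Cod C (edge_value f A B) = Dom C (edge_value f B B)"
    using smap_pnerve_entry[OF f e, of 0 0] smap_pnerve_entry[OF f e, of 1 1]
    unfolding edge_value_def by auto
next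
  fix A assume A: "A \<in> P"
  have e: "edge A A \<in> Simp (pnerve P le) 1" using edge_in_pnerve[OF A A] refl A by blast
  then have s: "f 1 (edge A A) \<in> Simp (cnerve C) 1" using f unfolding smap_def by blast
  have "f 1 (edge A A) 0 0 = edge_value f A A" using smap_pnerve_entry[OF f e, of 0 0] by simp
  with cnerve_in_Arr[OF s, of 0 0] cnerve_Id[OF s, of 0]
  show "edge_value f A A \<in> Arr C" "edge_value f A A = Id C (Dom C (edge_value f A A))"
    by simp_all
next
  fix A B D assume ABD: "A \<in> P" "B \<in> P" "D \<in> P" and le: "le A B" "le B D" "le A D"
  have t: "triangle A B D \<in> Simp (pnerve P le) 2" using triangle_in_pnerve[OF ABD refl le] .
  then have "f 2 (triangle A B D) \<in> Simp (cnerve C) 2" using f unfolding smap_def by blast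
  then have "Comp C (f 2 (triangle A B D) 1 2) (f 2 (triangle A B D) 0 1) = f 2 (triangle A B D) 0 2"
    by (rule cnerve_Comp) auto
  then show "Comp C (edge_value f B D) (edge_value f A B) = edge_value f A D"
    using smap_pnerve_entry[OF f t, of 1 2] smap_pnerve_entry[OF f t, of 0 1]
      smap_pnerve_entry[OF f t, of 0 2] by simp
qed

lemma smap_nerve_map:
  assumes G: "poset_functor C P le G"
  shows "smap (pnerve P le) (cnerve C) (nerve_map G)"
  unfolding smap_def
proof (intro conjI allI impI)
  fix n c assume "c \<in> Simp (pnerve P le) n"
  then have cP: "\<And>i. i \<le> n \<Longrightarrow> c i \<in> P" and ch: "\<And>i j. i \<le> j \<Longrightarrow> j \<le> n \<Longrightarrow> le (c i) (c j)"
    unfolding Simp_pnerve by auto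
  show "nerve_map G n c \<in> Simp (cnerve C) n"
    unfolding Simp_cnerve nerve_map_def
  proof (intro conjI allI impI)
    fix i j assume ij: "i \<le> j" "j \<le> n"
    then have a: "c i \<in> P" "c j \<in> P" "le (c i) (c j)" using cP ch by auto
    from ij poset_functor_in_Arr[OF G a] poset_functor_Dom[OF G a] poset_functor_Cod[OF G a]
    show "(if i \<le> j \<and> j \<le> n then G (c i) (c j) else undefined) \<in> Arr C"
      "Dom C (if i \<le> j \<and> j \<le> n then G (c i) (c j) else undefined) =
       Dom C (if i \<le> i \<and> i \<le> n then G (c i) (c i) else undefined)"
      "Cod C (if i \<le> j \<and> j \<le> n then G (c i) (c j) else undefined) =
       Dom C (if j \<le> j \<and> j \<le> n then G (c j) (c j) else undefined)"
      by simp_all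
  next
    fix i j k assume ijk: "i \<le> j" "j \<le> k" "k \<le> n"
    with cP ch have "c i \<in> P" "c j \<in> P" "c k \<in> P" "le (c i) (c j)" "le (c j) (c k)" "le (c i) (c k)"
      by auto
    from ijk poset_functor_Comp[OF G this]
    show "Comp C (if j \<le> k \<and> k \<le> n then G (c j) (c k) else undefined)
            (if i \<le> j \<and> j \<le> n then G (c i) (c j) else undefined) =
          (if i \<le> k \<and> k \<le> n then G (c i) (c k) else undefined)"
      by simp
  qed (use cP poset_functor_Id[OF G] in auto)
next
  fix m n th c assume "mono_op m n th" "c \<in> Simp (pnerve P le) n"
  then show "nerve_map G m (Act (pnerve P le) m n th c) = Act (cnerve C) m n th (nerve_map G n c)"
    unfolding nerve_map_def pnerve_def cnerve_def mono_op_def by (intro ext) auto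
qed

lemma marked_map_nerve_map_iff:
  assumes refl: "\<forall>A\<in>P. le A A"
  shows "marked_map (pnerve P le) (pmark (pnerve P le) Q) (cnerve C) (nmark C W) f \<longleftrightarrow>
         smap (pnerve P le) (cnerve C) f \<and> sends_marked W P le Q (edge_value f)"
proof -
  have "(\<forall>x\<in>pmark (pnerve P le) Q. f 1 x \<in> nmark C W) \<longleftrightarrow> sends_marked W P le Q (edge_value f)"
    if f: "smap (pnerve P le) (cnerve C) f"
  proof
    assume H: "\<forall>x\<in>pmark (pnerve P le) Q. f 1 x \<in> nmark C W"
    show "sends_marked W P le Q (edge_value f)"
      unfolding sends_marked_def
    proof (intro ballI impI)
      fix A B assume "A \<in> P" "B \<in> P" "le A B" "Q A B"
      then have "edge A B \<in> pmark (pnerve P le) Q"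
        using edge_in_pnerve[of A P B le] refl unfolding pmark_def by simp
      then show "edge_value f A B \<in> W" using H unfolding nmark_def edge_value_def by blast
    qed
  next
    assume M: "sends_marked W P le Q (edge_value f)"
    show "\<forall>x\<in>pmark (pnerve P le) Q. f 1 x \<in> nmark C W"
    proof
      fix x assume x: "x \<in> pmark (pnerve P le) Q"
      then have x1: "x \<in> Simp (pnerve P le) 1" unfolding pmark_def by blast
      then have "x 0 \<in> P" "x 1 \<in> P" "le (x 0) (x 1)" unfolding Simp_pnerve by auto
      with x M have "edge_value f (x 0) (x 1) \<in> W" unfolding pmark_def sends_marked_def by blast
      moreover have "f 1 x \<in> Simp (cnerve C) 1" using f x1 unfolding smap_def by blast
      ultimately show "f 1 x \<in> nmark C W"
        using smap_pnerve_entry[OF f x1, of 0 1] unfolding nmark_def by simp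
    qed
  qed
  then show ?thesis unfolding marked_map_def by blast
qed

lemma rlp_pnerve_iff_functors_extend:
  assumes refl: "\<forall>A\<in>P. le A A" and refl': "\<forall>A\<in>P'. le' A A"
  shows "rlp (cnerve C) (nmark C W) (pnerve P' le') (pmark (pnerve P' le') Q) (pnerve P le) (pmark (pnerve P le) Q)
     \<longleftrightarrow> functors_extend C W P' le' P le Q"
  unfolding rlp_def marked_map_nerve_map_iff[of P le, OF refl] marked_map_nerve_map_iff[of P' le', OF refl']
proof safe
  assume R: "\<forall>f. smap (pnerve P' le') (cnerve C) f \<and> sends_marked W P' le' Q (edge_value f) \<longrightarrow>
      (\<exists>g. (smap (pnerve P le) (cnerve C) g \<and> sends_marked W P le Q (edge_value g)) \<and>
           (\<forall>n a. a \<in> Simp (pnerve P' le') n \<longrightarrow> g n a = f n a))"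
  show "functors_extend C W P' le' P le Q"
    unfolding functors_extend_def
  proof (intro allI impI, elim conjE)
    fix G assume G: "poset_functor C P' le' G" and M: "sends_marked W P' le' Q G"
    obtain g where g: "smap (pnerve P le) (cnerve C) g" "sends_marked W P le Q (edge_value g)"
      and agree: "\<And>n a. a \<in> Simp (pnerve P' le') n \<Longrightarrow> g n a = nerve_map G n a"
      using R[rule_format, of "nerve_map G"] smap_nerve_map[OF G] M by auto
    have "edge_value g A B = G A B" if "A \<in> P'" "B \<in> P'" "le' A B" for A B
      using agree[OF edge_in_pnerve[of A P' B le']] that refl' by (simp add: edge_value_def nerve_map_def)
    then show "\<exists>G'. poset_functor C P le G' \<and> sends_marked W P le Q G' \<and>
        (\<forall>A\<in>P'. \<forall>B\<in>P'. le' A B \<longrightarrow> G' A B = G A B)"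
      using poset_functor_edge_value[OF g(1) refl] g(2) by blast
  qed
next
  fix f assume F: "functors_extend C W P' le' P le Q"
    and f: "smap (pnerve P' le') (cnerve C) f" and M: "sends_marked W P' le' Q (edge_value f)"
  obtain G' where G': "poset_functor C P le G'" "sends_marked W P le Q G'"
    and agree: "\<And>A B. A \<in> P' \<Longrightarrow> B \<in> P' \<Longrightarrow> le' A B \<Longrightarrow> G' A B = edge_value f A B"
    using functors_extendD[OF F poset_functor_edge_value[OF f refl'] M] by metis
  have "nerve_map G' n a = f n a" if "a \<in> Simp (pnerve P' le') n" for n a
    unfolding smap_pnerve_eq_nerve_map[OF f that] nerve_map_def
    by (intro ext) (use that agree in \<open>auto simp: Simp_pnerve\<close>)
  then show "\<exists>g. (smap (pnerve P le) (cnerve C) g \<and> sends_marked W P le Q (edge_value g)) \<and>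
      (\<forall>n a. a \<in> Simp (pnerve P' le') n \<longrightarrow> g n a = f n a)"
    using smap_nerve_map[OF G'(1)] G'(2) by (intro exI[of _ "nerve_map G'"]) auto
qed

definition horn_le :: "nat \<Rightarrow> nat \<Rightarrow> bool" where
  "horn_le x y \<longleftrightarrow> x \<le> y \<and> \<not> (x = 0 \<and> y = 2)"

lemma horn_chain_iff:
  fixes c :: "nat \<Rightarrow> nat"
  assumes c: "\<forall>i\<le>d. c i \<in> {0, 1, 2}" "\<forall>i j. i \<le> j \<longrightarrow> j \<le> d \<longrightarrow> c i \<le> c j"
  shows "(\<forall>i\<le>d. c i \<in> {0, 1}) \<or> (\<forall>i\<le>d. c i \<in> {1, 2}) \<longleftrightarrow>
    (\<forall>i j. i \<le> j \<longrightarrow> j \<le> d \<longrightarrow> \<not> (c i = 0 \<and> c j = 2))"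
proof (rule iffI)
  assume "\<forall>i j. i \<le> j \<longrightarrow> j \<le> d \<longrightarrow> \<not> (c i = 0 \<and> c j = 2)"
  moreover have "c j \<noteq> 2" if "c i = 0" "i \<le> d" "j \<le> d" for i j
  proof (cases "i \<le> j")
    case False
    then have "j \<le> i" by simp
    then have "c j \<le> c i" using c(2) \<open>i \<le> d\<close> by blast
    then show ?thesis using that by simp
  qed (use that calculation in blast)
  ultimately show "(\<forall>i\<le>d. c i \<in> {0, 1}) \<or> (\<forall>i\<le>d. c i \<in> {1, 2})"
    using c(1) by blast
next
  assume disj: "(\<forall>i\<le>d. c i \<in> {0, 1}) \<or> (\<forall>i\<le>d. c i \<in> {1, 2})"
  show "\<forall>i j. i \<le> j \<longrightarrow> j \<le> d \<longrightarrow> \<not> (c i = 0 \<and> c j = 2)"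
  proof (intro allI impI)
    fix i j assume "i \<le> j" "j \<le> d"
    then have "i \<le> d" by simp
    with disj \<open>j \<le> d\<close> show "\<not> (c i = 0 \<and> c j = 2)" by auto
  qed
qed

lemma Horn21_eq_pnerve: "Horn21 = pnerve {0, 1, 2} horn_le"
proof -
  have "c \<in> Simp Horn21 d \<longleftrightarrow> c \<in> Simp (pnerve {0, 1, 2} horn_le) d" for c d
  proof -
    have "c \<in> Simp Horn21 d \<longleftrightarrow>
        c \<in> Simp Delta2 d \<and> ((\<forall>i\<le>d. c i \<in> {0, 1}) \<or> (\<forall>i\<le>d. c i \<in> {1, 2}))"
      by (simp add: Horn21_def subsset_def)
    moreover have "c \<in> Simp (pnerve {0, 1, 2} horn_le) d \<longleftrightarrow>
        c \<in> Simp Delta2 d \<and> (\<forall>i j. i \<le> j \<longrightarrow> j \<le> d \<longrightarrow> \<not> (c i = 0 \<and> c j = 2))"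
      unfolding Delta2_def Simp_pnerve horn_le_def by (simp add: imp_conjR all_conj_distrib conj_ac)
    moreover have "c \<in> Simp Delta2 d \<Longrightarrow> \<forall>i\<le>d. c i \<in> {0, 1, 2}"
      and "c \<in> Simp Delta2 d \<Longrightarrow> \<forall>i j. i \<le> j \<longrightarrow> j \<le> d \<longrightarrow> c i \<le> c j"
      unfolding Delta2_def Simp_pnerve by simp_all
    ultimately show ?thesis
      using horn_chain_iff[of d c] by blast
  qed
  then have "Simp Horn21 d = Simp (pnerve {0, 1, 2} horn_le) d" for d
    by blast
  then show ?thesis
    unfolding Horn21_def subsset_def Delta2_def pnerve_def by (auto intro!: ext)
qed

lemma LJ_eq_pnerve: "LJ n k = pnerve (Lposet n k - {{0..n}}) (\<subseteq>)"
  and RJ_eq_pnerve: "RJ n k = pnerve (Lposet n k - {{0..n}}) (\<supseteq>)"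
  unfolding LJ_def RJ_def L_def R_def subsset_def pnerve_def by (auto intro!: ext)

lemma LJ_mark_eq_pmark: "LJ_mark n k = pmark (LJ n k) (\<lambda>A0 A1. Max A0 = Max A1)"
  and RJ_mark_eq_pmark: "RJ_mark n k = pmark (RJ n k) (\<lambda>A0 A1. Min A0 = Min A1)"
  unfolding LJ_mark_def L_mark_def RJ_mark_def R_mark_def pmark_def LJ_def RJ_def subsset_def by auto

lemma weakly_closed_iff_functors_extend:
  "weakly_closed (cnerve C) (nmark C W) \<longleftrightarrow>
   functors_extend C W {0, 1, 2} horn_le {0, 1, 2} (\<le>) (\<lambda>_ _. True)"
proof -
  have "Simp X 1 = pmark X (\<lambda>_ _. True)" for X :: "(nat \<Rightarrow> nat) sset"
    by (simp add: pmark_def)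
  then show ?thesis
    unfolding weakly_closed_def Horn21_eq_pnerve Delta2_def
    by (simp only:) (rule rlp_pnerve_iff_functors_extend; simp add: horn_le_def)
qed

lemma CLF_iff_functors_extend:
  "CLF (cnerve C) (nmark C W) \<longleftrightarrow>
     functors_extend C W {0, 1, 2} horn_le {0, 1, 2} (\<le>) (\<lambda>_ _. True) \<and>
     (\<forall>n k. 2 \<le> n \<longrightarrow> 0 < k \<longrightarrow> k \<le> n \<longrightarrow>
        functors_extend C W (Lposet n k - {{0..n}}) (\<subseteq>) (Lposet n k) (\<subseteq>) (\<lambda>A0 A1. Max A0 = Max A1))"
  unfolding CLF_def weakly_closed_iff_functors_extend LJ_mark_eq_pmark L_mark_def
  unfolding LJ_eq_pnerve L_def
  by (subst rlp_pnerve_iff_functors_extend; simp)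

lemma CRF_iff_functors_extend:
  "CRF (cnerve C) (nmark C W) \<longleftrightarrow>
     functors_extend C W {0, 1, 2} horn_le {0, 1, 2} (\<le>) (\<lambda>_ _. True) \<and>
     (\<forall>n k. 2 \<le> n \<longrightarrow> k < n \<longrightarrow>
        functors_extend C W (Lposet n k - {{0..n}}) (\<supseteq>) (Lposet n k) (\<supseteq>) (\<lambda>A0 A1. Min A0 = Min A1))"
  unfolding CRF_def weakly_closed_iff_functors_extend RJ_mark_eq_pmark R_mark_def
  unfolding RJ_eq_pnerve R_def
  by (subst rlp_pnerve_iff_functors_extend; simp)

definition closed_under_Comp :: "('o, 'a) category \<Rightarrow> 'a set \<Rightarrow> bool" where
  "closed_under_Comp C W \<longleftrightarrow> (\<forall>u\<in>W. \<forall>v\<in>W. Cod C u = Dom C v \<longrightarrow> Comp C v u \<in> W)"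

definition path2 :: "('o, 'a) category \<Rightarrow> 'a \<Rightarrow> 'a \<Rightarrow> nat \<Rightarrow> nat \<Rightarrow> 'a" where
  "path2 C u v x y =
     (if x = y then Id C (if x = 0 then Dom C u else if x = 1 then Cod C u else Cod C v)
      else if y = 1 then u else if x = 1 then v else Comp C v u)"

lemma (in cat) poset_functor_path2:
  assumes "u \<in> Arr C" "v \<in> Arr C" "Cod C u = Dom C v"
  shows "poset_functor C {0, 1, 2} (\<le>) (path2 C u v)"
  using assms Dom_in_Obj Cod_in_Obj
  unfolding poset_functor_def path2_def by (auto simp: Comp_Id_left Comp_Id_right)

locale marked_cat = cat +
  fixes W :: "'a set"
  assumes W_in_Arr: "W \<subseteq> Arr C" and Id_in_W: "\<forall>x\<in>Obj C. Id C x \<in> W"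
begin

lemma W_in_ArrI [simp]: "w \<in> W \<Longrightarrow> w \<in> Arr C"
  using W_in_Arr by blast

lemma Id_in_WI [simp]: "x \<in> Obj C \<Longrightarrow> Id C x \<in> W"
  using Id_in_W by blast

lemma closed_under_Comp_if_functors_extend_horn:
  assumes F: "functors_extend C W {0, 1, 2} horn_le {0, 1, 2} (\<le>) (\<lambda>_ _. True)"
  shows "closed_under_Comp C W"
  unfolding closed_under_Comp_def
proof (intro ballI impI)
  fix u v assume uv: "u \<in> W" "v \<in> W" "Cod C u = Dom C v"
  have "poset_functor C {0, 1, 2} horn_le (path2 C u v)"
    using poset_functor_pullback[OF poset_functor_path2, where c = id and le = horn_le] uv
    by (simp add: horn_le_def)
  moreover have "sends_marked W {0, 1, 2} horn_le (\<lambda>_ _. True) (path2 C u v)"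
    using uv Dom_in_Obj Cod_in_Obj unfolding sends_marked_def path2_def horn_le_def by auto
  ultimately obtain G' where G': "poset_functor C {0, 1, 2} (\<le>) G'" "sends_marked W {0, 1, 2} (\<le>) (\<lambda>_ _. True) G'"
    and agree: "\<And>x y. x \<in> {0, 1, 2} \<Longrightarrow> y \<in> {0, 1, 2} \<Longrightarrow> horn_le x y \<Longrightarrow> G' x y = path2 C u v x y"
    using functors_extendD[OF F] by metis
  have "Comp C v u = Comp C (G' 1 2) (G' 0 1)"
    using agree[of 1 2] agree[of 0 1] by (simp add: horn_le_def path2_def)
  also have "\<dots> = G' 0 2"
    by (rule poset_functor_Comp[OF G'(1)]) auto
  finally show "Comp C v u \<in> W"
    using G'(2) unfolding sends_marked_def by simp
qed

lemma path2_eq_on_horn: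
  assumes G: "poset_functor C {0, 1, 2} horn_le G"
    and xy: "x \<in> {0, 1, 2}" "y \<in> {0, 1, 2}" "horn_le x y"
  shows "path2 C (G 0 1) (G 1 2) x y = G x y"
proof -
  have le: "horn_le 0 1" "horn_le 1 2" by (auto simp: horn_le_def)
  have ids: "G 0 0 = Id C (Dom C (G 0 1))" "G 1 1 = Id C (Cod C (G 0 1))" "G 2 2 = Id C (Cod C (G 1 2))"
    using poset_functor_Id[OF G] poset_functor_Dom[OF G _ _ le(1)] poset_functor_Cod[OF G _ _ le(1)]
      poset_functor_Cod[OF G _ _ le(2)] by (simp_all add: One_nat_def)
  have "(x, y) \<in> {(0, 0), (1, 1), (2, 2), (0, 1), (1, 2)}"
    using xy unfolding horn_le_def by auto
  then show ?thesis using ids by (auto simp: path2_def)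
qed

lemma functors_extend_horn_if_closed_under_Comp:
  assumes closed: "closed_under_Comp C W"
  shows "functors_extend C W {0, 1, 2} horn_le {0, 1, 2} (\<le>) (\<lambda>_ _. True)"
  unfolding functors_extend_def
proof (intro allI impI, elim conjE)
  fix G assume G: "poset_functor C {0, 1, 2} horn_le G" and M: "sends_marked W {0, 1, 2} horn_le (\<lambda>_ _. True) G"
  have le: "horn_le 0 1" "horn_le 1 2" by (auto simp: horn_le_def)
  have u: "G 0 1 \<in> W" and v: "G 1 2 \<in> W"
    using M le unfolding sends_marked_def by auto
  have uv: "Cod C (G 0 1) = Dom C (G 1 2)"
    using poset_functor_Cod[OF G _ _ le(1)] poset_functor_Dom[OF G _ _ le(2)] by simp
  have "sends_marked W {0, 1, 2} (\<le>) (\<lambda>_ _. True) (path2 C (G 0 1) (G 1 2))"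
    unfolding sends_marked_def
  proof (intro ballI impI)
    fix x y :: nat assume "x \<in> {0, 1, 2}" "y \<in> {0, 1, 2}" "x \<le> y"
    then consider "x = 0" "y = 2" | "horn_le x y" unfolding horn_le_def by auto
    then show "path2 C (G 0 1) (G 1 2) x y \<in> W"
    proof cases
      case 1
      then show ?thesis using u v uv closed unfolding path2_def closed_under_Comp_def by simp
    next
      case 2
      then have "G x y \<in> W" using M \<open>x \<in> {0, 1, 2}\<close> \<open>y \<in> {0, 1, 2}\<close> unfolding sends_marked_def by blast
      then show ?thesis using path2_eq_on_horn[OF G \<open>x \<in> {0, 1, 2}\<close> \<open>y \<in> {0, 1, 2}\<close> 2] by simp
    qed
  qed
  then show "\<exists>G'. poset_functor C {0, 1, 2} (\<le>) G' \<and> sends_marked W {0, 1, 2} (\<le>) (\<lambda>_ _. True) G' \<and>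
      (\<forall>x\<in>{0, 1, 2}. \<forall>y\<in>{0, 1, 2}. horn_le x y \<longrightarrow> G' x y = G x y)"
    using poset_functor_path2[OF W_in_ArrI[OF u] W_in_ArrI[OF v] uv] path2_eq_on_horn[OF G] by blast
qed

lemma functors_extend_horn_iff_closed_under_Comp:
  "functors_extend C W {0, 1, 2} horn_le {0, 1, 2} (\<le>) (\<lambda>_ _. True) \<longleftrightarrow> closed_under_Comp C W"
  using closed_under_Comp_if_functors_extend_horn functors_extend_horn_if_closed_under_Comp by blast

end

definition Hom :: "('o, 'a) category \<Rightarrow> 'o \<Rightarrow> 'o \<Rightarrow> 'a set" where
  "Hom C X Y = {f \<in> Arr C. Dom C f = X \<and> Cod C f = Y}"

definition cocone :: "('o, 'a) category \<Rightarrow> ('p::order \<Rightarrow> 'p \<Rightarrow> 'a) \<Rightarrow> 'p set \<Rightarrow> 'o \<Rightarrow> ('p \<Rightarrow> 'a) \<Rightarrow> bool" where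
  "cocone C G S Y lam \<longleftrightarrow> Y \<in> Obj C \<and> (\<forall>A\<in>S. lam A \<in> Hom C (Dom C (G A A)) Y) \<and>
     (\<forall>A\<in>S. \<forall>B\<in>S. A \<le> B \<longrightarrow> Comp C (lam B) (G A B) = lam A)"

lemma coconeD:
  assumes "cocone C G S Y lam"
  shows "Y \<in> Obj C" "A \<in> S \<Longrightarrow> lam A \<in> Hom C (Dom C (G A A)) Y"
    "A \<in> S \<Longrightarrow> B \<in> S \<Longrightarrow> A \<le> B \<Longrightarrow> Comp C (lam B) (G A B) = lam A"
  using assms unfolding cocone_def by blast+

context cat
begin

lemma HomI: "f \<in> Arr C \<Longrightarrow> Dom C f = X \<Longrightarrow> Cod C f = Y \<Longrightarrow> f \<in> Hom C X Y"
  and HomD: "f \<in> Hom C X Y \<Longrightarrow> f \<in> Arr C" "f \<in> Hom C X Y \<Longrightarrow> Dom C f = X" "f \<in> Hom C X Y \<Longrightarrow> Cod C f = Y"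
  unfolding Hom_def by simp_all

lemma Comp_in_Hom: "f \<in> Hom C X Y \<Longrightarrow> g \<in> Hom C Y Z \<Longrightarrow> Comp C g f \<in> Hom C X Z"
  unfolding Hom_def by auto

lemma Comp_assoc_Hom:
  "f \<in> Hom C X Y \<Longrightarrow> g \<in> Hom C Y Z \<Longrightarrow> h \<in> Hom C Z V \<Longrightarrow> Comp C (Comp C h g) f = Comp C h (Comp C g f)"
  unfolding Hom_def by (auto intro: Comp_assoc)

lemma Id_in_Hom: "X \<in> Obj C \<Longrightarrow> Id C X \<in> Hom C X X"
  unfolding Hom_def by simp

lemma Comp_Id_Hom: "f \<in> Hom C X Y \<Longrightarrow> Comp C f (Id C X) = f" "f \<in> Hom C X Y \<Longrightarrow> Comp C (Id C Y) f = f"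
  unfolding Hom_def by (auto intro: Comp_Id_left Comp_Id_right)

lemma Hom_Obj: "f \<in> Hom C X Y \<Longrightarrow> X \<in> Obj C" "f \<in> Hom C X Y \<Longrightarrow> Y \<in> Obj C"
  unfolding Hom_def using Dom_in_Obj Cod_in_Obj by auto

lemma poset_functor_Hom:
  "poset_functor C P le G \<Longrightarrow> A \<in> P \<Longrightarrow> B \<in> P \<Longrightarrow> le A B \<Longrightarrow> G A B \<in> Hom C (Dom C (G A A)) (Dom C (G B B))"
  unfolding Hom_def
  using poset_functor_in_Arr[of C P le G A B] poset_functor_Dom[of C P le G A B] poset_functor_Cod[of C P le G A B]
  by blast

lemma cocone_pullback:
  assumes G: "poset_functor C P (\<le>) G" and co: "cocone C G S Y mu" and "S \<subseteq> P" "U \<subseteq> P"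
    and r: "\<And>A. A \<in> U \<Longrightarrow> r A \<in> S \<and> A \<le> r A"
    and mono: "\<And>A B. A \<in> U \<Longrightarrow> B \<in> U \<Longrightarrow> A \<le> B \<Longrightarrow> r A \<le> r B"
  shows "cocone C G U Y (\<lambda>A. Comp C (mu (r A)) (G A (r A)))"
  unfolding cocone_def
proof (intro conjI ballI impI)
  show "Y \<in> Obj C" using coconeD(1)[OF co] .
next
  fix A assume A: "A \<in> U"
  with r assms(3,4) have "r A \<in> P" "A \<in> P" "r A \<in> S" "A \<le> r A" by auto
  then show "Comp C (mu (r A)) (G A (r A)) \<in> Hom C (Dom C (G A A)) Y"
    using Comp_in_Hom[OF poset_functor_Hom[OF G] coconeD(2)[OF co]] by blast
next
  fix A B :: 'b assume A: "A \<in> U" and B: "B \<in> U" and AB: "A \<le> B"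
  have P: "A \<in> P" "B \<in> P" "r A \<in> P" "r B \<in> P" using A B r assms(3,4) by auto
  have le: "A \<le> r A" "B \<le> r B" "r A \<le> r B" "A \<le> r B" using A B r mono[OF A B AB] AB by (auto intro: order_trans)
  have S: "r A \<in> S" "r B \<in> S" using A B r by auto
  have "Comp C (Comp C (mu (r B)) (G B (r B))) (G A B) = Comp C (mu (r B)) (G A (r B))"
    using Comp_assoc_Hom[OF poset_functor_Hom[OF G P(1,2) AB] poset_functor_Hom[OF G P(2,4) le(2)] coconeD(2)[OF co S(2)]]
      poset_functor_Comp[OF G P(1,2,4) AB le(2,4)] by simp
  also have "\<dots> = Comp C (mu (r B)) (Comp C (G (r A) (r B)) (G A (r A)))"
    using poset_functor_Comp[OF G P(1,3,4) le(1,3,4)] by simp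
  also have "\<dots> = Comp C (mu (r A)) (G A (r A))"
    using Comp_assoc_Hom[OF poset_functor_Hom[OF G P(1,3) le(1)] poset_functor_Hom[OF G P(3,4) le(3)] coconeD(2)[OF co S(2)]]
      coconeD(3)[OF co S le(3)] by simp
  finally show "Comp C (Comp C (mu (r B)) (G B (r B))) (G A B) = Comp C (mu (r A)) (G A (r A))" .
qed

definition extend_top :: "('p \<Rightarrow> 'p \<Rightarrow> 'a) \<Rightarrow> 'p \<Rightarrow> 'o \<Rightarrow> ('p \<Rightarrow> 'a) \<Rightarrow> 'p \<Rightarrow> 'p \<Rightarrow> 'a" where
  "extend_top G N Y lam A B = (if B = N then (if A = N then Id C Y else lam A) else G A B)"

lemma poset_functor_extend_top:
  assumes G: "poset_functor C P (\<le>) G" and co: "cocone C G P Y lam"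
    and N: "N \<notin> P" and top: "\<And>A. A \<in> P \<Longrightarrow> A \<le> N"
  shows "poset_functor C (insert N P) (\<le>) (extend_top G N Y lam)"
proof -
  have Y: "Y \<in> Obj C" by (rule coconeD(1)[OF co])
  have below: "A \<in> P" if "A \<in> insert N P" "B \<in> P" "A \<le> B" for A B
    using that top N by (metis insertE antisym)
  show ?thesis
    unfolding poset_functor_def
  proof (intro conjI ballI impI)
    fix A assume "A \<in> insert N P"
    then show "extend_top G N Y lam A A \<in> Arr C"
      "extend_top G N Y lam A A = Id C (Dom C (extend_top G N Y lam A A))"
      using Y poset_functor_Id_in_Arr[OF G] poset_functor_Id[OF G] N unfolding extend_top_def by auto
  next
    fix A B assume A: "A \<in> insert N P" and B: "B \<in> insert N P" and AB: "A \<le> B"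
    have "extend_top G N Y lam A B \<in> Hom C (Dom C (extend_top G N Y lam A A)) (Dom C (extend_top G N Y lam B B))"
    proof (cases "B = N")
      case True
      then show ?thesis using A Y N coconeD(2)[OF co, of A] Id_in_Hom unfolding extend_top_def by auto
    next
      case False
      with A B AB below N have "A \<in> P" "B \<in> P" "A \<noteq> N" by auto
      with False AB show ?thesis using poset_functor_Hom[OF G] unfolding extend_top_def by auto
    qed
    then show "extend_top G N Y lam A B \<in> Arr C"
      "Dom C (extend_top G N Y lam A B) = Dom C (extend_top G N Y lam A A)"
      "Cod C (extend_top G N Y lam A B) = Dom C (extend_top G N Y lam B B)"
      by (simp_all add: HomD)
  next
    fix A B D assume A: "A \<in> insert N P" and B: "B \<in> insert N P" and D: "D \<in> insert N P"
      and le: "A \<le> B" "B \<le> D" "A \<le> D"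
    show "Comp C (extend_top G N Y lam B D) (extend_top G N Y lam A B) = extend_top G N Y lam A D"
    proof (cases "D = N")
      case True
      show ?thesis
      proof (cases "B = N")
        case True
        then show ?thesis
          using \<open>D = N\<close> A Y N coconeD(2)[OF co, of A] Comp_Id_Hom(2) Id_in_Hom
          unfolding extend_top_def by auto
      next
        case False
        with A B le(1) below N have "A \<in> P" "B \<in> P" "A \<noteq> N" by auto
        with False \<open>D = N\<close> le show ?thesis using coconeD(3)[OF co] unfolding extend_top_def by auto
      qed
    next
      case False
      with A B D le below N have "A \<in> P" "B \<in> P" "D \<in> P" "A \<noteq> N" "B \<noteq> N" by auto
      with False le show ?thesis using poset_functor_Comp[OF G] unfolding extend_top_def by auto
    qed
  qed
qed


lemma cocone_subset: "cocone C G S Y lam \<Longrightarrow> S' \<subseteq> S \<Longrightarrow> cocone C G S' Y lam"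
  unfolding cocone_def by (meson subsetD)

lemma cocone_postcomp:
  assumes G: "poset_functor C P (\<le>) G" and co: "cocone C G P Y lam" and f: "f \<in> Hom C Y Z"
  shows "cocone C G P Z (\<lambda>A. Comp C f (lam A))"
  unfolding cocone_def
proof (intro conjI ballI impI)
  show "Z \<in> Obj C" using Hom_Obj(2)[OF f] .
next
  fix A assume "A \<in> P"
  then show "Comp C f (lam A) \<in> Hom C (Dom C (G A A)) Z" using Comp_in_Hom[OF coconeD(2)[OF co] f] by blast
next
  fix A B assume A: "A \<in> P" and B: "B \<in> P" and AB: "A \<le> B"
  have "Comp C (Comp C f (lam B)) (G A B) = Comp C f (Comp C (lam B) (G A B))"
    by (rule Comp_assoc_Hom[OF poset_functor_Hom[OF G A B AB] coconeD(2)[OF co B] f])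
  then show "Comp C (Comp C f (lam B)) (G A B) = Comp C f (lam A)"
    using coconeD(3)[OF co A B AB] by simp
qed

lemma cocone_below:
  assumes G: "poset_functor C P (\<le>) G" and A: "A \<in> P"
  shows "cocone C G {B \<in> P. B \<le> A} (Dom C (G A A)) (\<lambda>B. G B A)"
  unfolding cocone_def
proof (intro conjI ballI impI)
  show "Dom C (G A A) \<in> Obj C" using Hom_Obj(2)[OF poset_functor_Hom[OF G A A]] by simp
next
  fix B assume "B \<in> {B \<in> P. B \<le> A}"
  then show "G B A \<in> Hom C (Dom C (G B B)) (Dom C (G A A))" using poset_functor_Hom[OF G _ A] by blast
next
  fix B B' assume "B \<in> {B \<in> P. B \<le> A}" "B' \<in> {B \<in> P. B \<le> A}" "B \<le> B'"
  then show "Comp C (G B' A) (G B B') = G B A" using poset_functor_Comp[OF G _ _ A] by blast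
qed

lemma cocone_insert_maximal:
  assumes G: "poset_functor C P (\<le>) G" and co: "cocone C G (P - {A}) Y mu"
    and A: "A \<in> P" and max: "\<And>B. B \<in> P \<Longrightarrow> A \<le> B \<Longrightarrow> B = A"
    and nu: "nu \<in> Hom C (Dom C (G A A)) Y"
    and compat: "\<And>B. B \<in> P - {A} \<Longrightarrow> B \<le> A \<Longrightarrow> Comp C nu (G B A) = mu B"
  shows "cocone C G P Y (mu(A := nu))"
  unfolding cocone_def
proof (intro conjI ballI impI)
  show "Y \<in> Obj C" using coconeD(1)[OF co] .
next
  fix B assume "B \<in> P"
  then show "(mu(A := nu)) B \<in> Hom C (Dom C (G B B)) Y" using nu coconeD(2)[OF co] by auto
next
  fix B B' assume B: "B \<in> P" and B': "B' \<in> P" and le: "B \<le> B'"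
  show "Comp C ((mu(A := nu)) B') (G B B') = (mu(A := nu)) B"
  proof (cases "B' = A")
    case True
    show ?thesis
    proof (cases "B = A")
      case True
      then show ?thesis using \<open>B' = A\<close> A nu poset_functor_Id[OF G A] Comp_Id_Hom(1)[OF nu] by simp
    qed (use True B le compat in auto)
  next
    case False
    then have "B \<noteq> A" using max[OF B'] le by blast
    with False B B' le show ?thesis using coconeD(3)[OF co] by simp
  qed
qed

end

section \<open>A proper calculus of left fractions gives CLF\<close>

locale left_fractions = marked_cat +
  assumes proper_left: "proper_left_fractions C W"
begin

lemma Comp_in_W: "u \<in> W \<Longrightarrow> v \<in> W \<Longrightarrow> Cod C u = Dom C v \<Longrightarrow> Comp C v u \<in> W"
  using proper_left unfolding proper_left_fractions_def by blast

lemma Ore_square: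
  assumes f: "f \<in> Hom C X Y" and w: "w \<in> W" "w \<in> Hom C X X'"
  obtains Z f' w' where "f' \<in> Hom C X' Z" "w' \<in> W" "w' \<in> Hom C Y Z" "Comp C f' w = Comp C w' f"
    "f \<in> W \<Longrightarrow> f' \<in> W"
proof -
  obtain f' w' where "f' \<in> Arr C" "w' \<in> W" "Dom C f' = Cod C w" "Dom C w' = Cod C f"
      "Cod C f' = Cod C w'" "Comp C f' w = Comp C w' f" "f \<in> W \<longrightarrow> f' \<in> W"
    using proper_left f w HomD unfolding proper_left_fractions_def by metis
  with that f w show ?thesis by (metis HomD HomI W_in_ArrI)
qed

lemma cancel_W:
  assumes f: "f \<in> Hom C X Y" and g: "g \<in> Hom C X Y" and w: "w \<in> W" "w \<in> Hom C X' X"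
    and eq: "Comp C f w = Comp C g w"
  obtains v where "v \<in> W" "Dom C v = Y" "Comp C v f = Comp C v g"
proof -
  have iii: "\<forall>f\<in>Arr C. \<forall>g\<in>Arr C. Dom C f = Dom C g \<longrightarrow> Cod C f = Cod C g \<longrightarrow>
      (\<exists>w\<in>W. Cod C w = Dom C f \<and> Comp C f w = Comp C g w) \<longrightarrow>
      (\<exists>v\<in>W. Dom C v = Cod C f \<and> Comp C v f = Comp C v g)"
    using proper_left unfolding proper_left_fractions_def by blast
  have "\<exists>w\<in>W. Cod C w = Dom C f \<and> Comp C f w = Comp C g w"
    using w eq f by (auto simp: Hom_def)
  moreover have "f \<in> Arr C" "g \<in> Arr C" "Dom C f = Dom C g" "Cod C f = Cod C g"
    using f g by (simp_all add: Hom_def)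
  ultimately have "\<exists>v\<in>W. Dom C v = Cod C f \<and> Comp C v f = Comp C v g"
    using iii by blast
  with that show ?thesis using f by (auto simp: Hom_def)
qed

definition eq_after_W where
  "eq_after_W x y \<longleftrightarrow> (\<exists>u\<in>W. Dom C u = Cod C x \<and> Comp C u x = Comp C u y)"

lemma eq_after_W_refl: "x \<in> Arr C \<Longrightarrow> eq_after_W x x"
  unfolding eq_after_W_def using Cod_in_Obj by (intro bexI[of _ "Id C (Cod C x)"]) auto

lemma eq_after_W_precomp:
  assumes x: "x \<in> Hom C X Y" and y: "y \<in> Hom C X Y" and g: "g \<in> Hom C Z X" and e: "eq_after_W x y"
  shows "eq_after_W (Comp C x g) (Comp C y g)"
proof -
  obtain u where u: "u \<in> W" "Dom C u = Y" and eq: "Comp C u x = Comp C u y"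
    using e x unfolding eq_after_W_def by (auto simp: Hom_def)
  have uh: "u \<in> Hom C Y (Cod C u)" using u by (auto intro: HomI)
  have "Comp C u (Comp C x g) = Comp C u (Comp C y g)"
    using eq Comp_assoc_Hom[OF g x uh] Comp_assoc_Hom[OF g y uh] by simp
  moreover have "Dom C u = Cod C (Comp C x g)" using u Comp_in_Hom[OF g x] by (auto simp: Hom_def)
  ultimately show ?thesis unfolding eq_after_W_def using u(1) by blast
qed

lemma eq_after_W_cancel:
  assumes x: "x \<in> Hom C X Y" and y: "y \<in> Hom C X Y" and w: "w \<in> W" "w \<in> Hom C Z X"
    and e: "eq_after_W (Comp C x w) (Comp C y w)"
  shows "eq_after_W x y"
proof -
  obtain u where u: "u \<in> W" "Dom C u = Y" and eq: "Comp C u (Comp C x w) = Comp C u (Comp C y w)"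
    using e Comp_in_Hom[OF w(2) x] unfolding eq_after_W_def by (auto simp: Hom_def)
  have uh: "u \<in> Hom C Y (Cod C u)" using u by (auto intro: HomI)
  then have "Comp C (Comp C u x) w = Comp C (Comp C u y) w"
    using eq Comp_assoc_Hom[OF w(2) x uh] Comp_assoc_Hom[OF w(2) y uh] by simp
  then obtain v where v: "v \<in> W" "Dom C v = Cod C u" and veq: "Comp C v (Comp C u x) = Comp C v (Comp C u y)"
    using cancel_W[OF Comp_in_Hom[OF x uh] Comp_in_Hom[OF y uh] w] by metis
  have vh: "v \<in> Hom C (Cod C u) (Cod C v)" using v by (auto intro: HomI)
  show ?thesis
    unfolding eq_after_W_def
  proof (intro bexI conjI)
    show "Comp C v u \<in> W" using Comp_in_W u v by simp
    show "Dom C (Comp C v u) = Cod C x" using Comp_in_Hom[OF uh vh] x u by (auto simp: Hom_def)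
    show "Comp C (Comp C v u) x = Comp C (Comp C v u) y"
      using veq Comp_assoc_Hom[OF x uh vh] Comp_assoc_Hom[OF y uh vh] by simp
  qed
qed

text \<open>Two equalizing arrows of W are amalgamated by an Ore square.\<close>

lemma eq_after_W_finite:
  assumes "finite I" and Y: "Y \<in> Obj C"
    and xy: "\<And>i. i \<in> I \<Longrightarrow> x i \<in> Hom C (X i) Y \<and> y i \<in> Hom C (X i) Y \<and> eq_after_W (x i) (y i)"
  shows "\<exists>u\<in>W. Dom C u = Y \<and> (\<forall>i\<in>I. Comp C u (x i) = Comp C u (y i))"
  using assms(1) xy
proof (induction I rule: finite_induct)
  case empty
  show ?case using Y by (intro bexI[of _ "Id C Y"]) auto
next
  case (insert j I)
  then obtain u1 where u1: "u1 \<in> W" "Dom C u1 = Y" and e1: "\<forall>i\<in>I. Comp C u1 (x i) = Comp C u1 (y i)"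
    by auto
  obtain u2 where u2: "u2 \<in> W" "Dom C u2 = Y" and e2: "Comp C u2 (x j) = Comp C u2 (y j)"
    using insert.prems[of j] unfolding eq_after_W_def by (auto simp: Hom_def)
  have u1h: "u1 \<in> Hom C Y (Cod C u1)" and u2h: "u2 \<in> Hom C Y (Cod C u2)" using u1 u2 by (auto intro: HomI)
  obtain Z f' w' where f': "f' \<in> Hom C (Cod C u2) Z" and w': "w' \<in> W" "w' \<in> Hom C (Cod C u1) Z"
    and sq: "Comp C f' u2 = Comp C w' u1"
    using Ore_square[OF u1h u2(1) u2h] by metis
  show ?case
  proof (intro bexI conjI ballI)
    show "Comp C w' u1 \<in> W" using Comp_in_W[OF u1(1) w'(1)] w'(2) by (auto simp: Hom_def)
    show "Dom C (Comp C w' u1) = Y" using Comp_in_Hom[OF u1h w'(2)] by (auto simp: Hom_def)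
    fix i assume i: "i \<in> insert j I"
    then have xi: "x i \<in> Hom C (X i) Y" and yi: "y i \<in> Hom C (X i) Y" using insert.prems by auto
    show "Comp C (Comp C w' u1) (x i) = Comp C (Comp C w' u1) (y i)"
    proof (cases "i = j")
      case True
      then show ?thesis
        using e2 sq[symmetric] Comp_assoc_Hom[OF xi u2h f'] Comp_assoc_Hom[OF yi u2h f'] by simp
    next
      case False
      then show ?thesis
        using i e1 Comp_assoc_Hom[OF xi u1h w'(2)] Comp_assoc_Hom[OF yi u1h w'(2)] by simp
    qed
  qed
qed

lemma eq_after_W_cocones_up:
  assumes G: "poset_functor C P (\<le>) G" and x: "cocone C G P Z x" and y: "cocone C G P Z y"
    and B: "B \<in> P" "B' \<in> P" "B \<le> B'" "G B B' \<in> W" and e: "eq_after_W (x B) (y B)"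
  shows "eq_after_W (x B') (y B')"
  by (rule eq_after_W_cancel[OF coconeD(2)[OF x B(2)] coconeD(2)[OF y B(2)] B(4) poset_functor_Hom[OF G B(1-3)]])
    (use e coconeD(3)[OF x B(1-3)] coconeD(3)[OF y B(1-3)] in simp)

lemma eq_after_W_cocones_down:
  assumes G: "poset_functor C P (\<le>) G" and x: "cocone C G P Z x" and y: "cocone C G P Z y"
    and B: "B \<in> P" "B' \<in> P" "B \<le> B'" and e: "eq_after_W (x B') (y B')"
  shows "eq_after_W (x B) (y B)"
  using eq_after_W_precomp[OF coconeD(2)[OF x B(2)] coconeD(2)[OF y B(2)] poset_functor_Hom[OF G B] e]
    coconeD(3)[OF x B] coconeD(3)[OF y B] by simp

text \<open>Agreement up to W at b spreads along zigzags B \<supseteq> D \<subseteq> D' \<supseteq> b whose outer steps are marked.\<close>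

lemma cocones_equalized_by_W:
  assumes fin: "finite S" and G: "poset_functor C S (\<le>) G"
    and x: "cocone C G S Z x" and y: "cocone C G S Z y" and b: "b \<in> S" "eq_after_W (x b) (y b)"
    and zigzag: "\<And>B. B \<in> S \<Longrightarrow> \<exists>D D'. D \<in> S \<and> D' \<in> S \<and> D \<le> B \<and> D \<le> D' \<and> b \<le> D' \<and>
       G D B \<in> W \<and> G b D' \<in> W"
  shows "\<exists>u\<in>W. Dom C u = Z \<and> (\<forall>B\<in>S. Comp C u (x B) = Comp C u (y B))"
proof (rule eq_after_W_finite[OF fin Hom_Obj(2)[OF coconeD(2)[OF x b(1)]]])
  fix B assume B: "B \<in> S"
  then obtain D D' where D: "D \<in> S" "D' \<in> S" "D \<le> B" "D \<le> D'" "b \<le> D'" "G D B \<in> W" "G b D' \<in> W"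
    using zigzag by blast
  have "eq_after_W (x D') (y D')" by (rule eq_after_W_cocones_up[OF G x y b(1) D(2,5,7) b(2)])
  then have "eq_after_W (x D) (y D)" by (rule eq_after_W_cocones_down[OF G x y D(1,2,4)])
  then have "eq_after_W (x B) (y B)" by (rule eq_after_W_cocones_up[OF G x y D(1) B D(3,6)])
  then show "x B \<in> Hom C (Dom C (G B B)) Z \<and> y B \<in> Hom C (Dom C (G B B)) Z \<and> eq_after_W (x B) (y B)"
    using coconeD(2)[OF x B] coconeD(2)[OF y B] by blast
qed

text \<open>Adjoining a maximal index A to a cocone: the leg at A comes from an Ore square on the span
  formed by the leg at b and G b A, and the resulting ambiguity below A is removed by
  cocones_equalized_by_W.\<close>

lemma cocone_add_maximal:
  assumes fin: "finite P" and G: "poset_functor C P (\<le>) G"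
    and co: "cocone C G (P - {A}) Y lam" and A: "A \<in> P" and max: "\<And>B. B \<in> P \<Longrightarrow> A \<le> B \<Longrightarrow> B = A"
    and b: "b \<in> P - {A}" "b \<le> A" "G b A \<in> W"
    and zigzag: "\<And>B. B \<in> P - {A} \<Longrightarrow> B \<le> A \<Longrightarrow> \<exists>D D'. D \<in> P - {A} \<and> D' \<in> P - {A} \<and>
       D \<le> B \<and> D \<le> D' \<and> b \<le> D' \<and> D' \<le> A \<and> G D B \<in> W \<and> G b D' \<in> W"
  shows "\<exists>Y' lam'. cocone C G P Y' lam' \<and> (\<forall>B\<in>P - {A}. lam B \<in> W \<longrightarrow> lam' B \<in> W) \<and>
    (lam b \<in> W \<longrightarrow> lam' A \<in> W)"
proof -
  define R where "R = {B \<in> P - {A}. B \<le> A}"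
  have GR: "poset_functor C R (\<le>) G" and GA: "poset_functor C (P - {A}) (\<le>) G"
    by (rule poset_functor_subset[OF G], auto simp: R_def)+
  have bR: "b \<in> R" using b by (simp add: R_def)
  obtain Z f' w' where f': "f' \<in> Hom C (Dom C (G A A)) Z" and w': "w' \<in> W" "w' \<in> Hom C Y Z"
    and square: "Comp C f' (G b A) = Comp C w' (lam b)" and f'W: "lam b \<in> W \<Longrightarrow> f' \<in> W"
    using Ore_square[OF coconeD(2)[OF co b(1)] b(3) poset_functor_Hom[OF G _ A b(2)]] b(1) by blast
  have x: "cocone C G R Z (\<lambda>B. Comp C f' (G B A))"
    using cocone_postcomp[OF GR cocone_subset[OF cocone_below[OF G A], of R] f'] by (auto simp: R_def)
  have y: "cocone C G R Z (\<lambda>B. Comp C w' (lam B))"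
    using cocone_postcomp[OF GR cocone_subset[OF co, of R] w'(2)] by (auto simp: R_def)
  have "eq_after_W (Comp C f' (G b A)) (Comp C w' (lam b))"
    using square eq_after_W_refl coconeD(2)[OF y bR] by (simp add: Hom_def)
  moreover have "\<exists>D D'. D \<in> R \<and> D' \<in> R \<and> D \<le> B \<and> D \<le> D' \<and> b \<le> D' \<and> G D B \<in> W \<and> G b D' \<in> W"
    if "B \<in> R" for B
    using zigzag[of B] that unfolding R_def by (blast intro: order_trans)
  moreover have "finite R" using fin by (simp add: R_def)
  ultimately obtain u where u: "u \<in> W" "Dom C u = Z"
    and equalized: "\<And>B. B \<in> R \<Longrightarrow> Comp C u (Comp C f' (G B A)) = Comp C u (Comp C w' (lam B))"
    using cocones_equalized_by_W[OF _ GR x y bR] by blast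
  have uh: "u \<in> Hom C Z (Cod C u)" using u by (simp add: Hom_def)
  have "cocone C G P (Cod C u) ((\<lambda>B. Comp C (Comp C u w') (lam B))(A := Comp C u f'))"
  proof (rule cocone_insert_maximal[OF G cocone_postcomp[OF GA co Comp_in_Hom[OF w'(2) uh]] A max
        Comp_in_Hom[OF f' uh]])
    fix B assume "B \<in> P - {A}" "B \<le> A"
    then have B: "B \<in> R" "B \<in> P" by (simp_all add: R_def)
    have "Comp C (Comp C u f') (G B A) = Comp C u (Comp C w' (lam B))"
      using Comp_assoc_Hom[OF poset_functor_Hom[OF G B(2) A] f' uh] equalized[OF B(1)] B(1)
      by (simp add: R_def)
    also have "\<dots> = Comp C (Comp C u w') (lam B)"
      using Comp_assoc_Hom[OF coconeD(2)[OF co] w'(2) uh] B(1) by (simp add: R_def)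
    finally show "Comp C (Comp C u f') (G B A) = Comp C (Comp C u w') (lam B)" .
  qed
  moreover have "Comp C (Comp C u w') (lam B) \<in> W" if "B \<in> P - {A}" "lam B \<in> W" for B
    using Comp_in_W[OF that(2) Comp_in_W[OF w'(1) u(1)]] w'(2) uh coconeD(2)[OF co that(1)]
      Comp_in_Hom[OF w'(2) uh] by (simp add: Hom_def)
  moreover have "Comp C u f' \<in> W" if "lam b \<in> W"
    using Comp_in_W[OF f'W[OF that] u(1)] f' u by (simp add: Hom_def)
  ultimately show ?thesis by fastforce
qed


lemma cocone_all_marked:
  assumes "finite S" "b \<in> S" "\<And>A. A \<in> S \<Longrightarrow> b \<le> A" "poset_functor C S (\<le>) G"
    "\<And>A B. A \<in> S \<Longrightarrow> B \<in> S \<Longrightarrow> A \<le> B \<Longrightarrow> G A B \<in> W"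
  shows "\<exists>Y lam. cocone C G S Y lam \<and> (\<forall>A\<in>S. lam A \<in> W)"
  using assms
proof (induction S rule: finite_psubset_induct)
  case (psubset S)
  note b = psubset.prems(1,2) and G = psubset.prems(3) and GW = psubset.prems(4)
  show ?case
  proof (cases "S = {b}")
    case True
    have "cocone C G S (Dom C (G b b)) (\<lambda>_. G b b)"
      using True poset_functor_Hom[OF G b(1) b(1)] Hom_Obj(2) poset_functor_Comp[OF G b(1) b(1) b(1)]
      unfolding cocone_def by auto
    then show ?thesis using True GW b by auto
  next
    case False
    then obtain A where A: "A \<in> S - {b}" and maxb: "\<And>B. B \<in> S - {b} \<Longrightarrow> A \<le> B \<Longrightarrow> A = B"
      using finite_has_maximal[of "S - {b}"] psubset.hyps b(1) by blast
    have max: "B = A" if "B \<in> S" "A \<le> B" for B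
    proof (cases "B = b")
      case True
      with that A b(2)[of A] have "A = b" by (simp add: antisym)
      with A show ?thesis by simp
    qed (use maxb[of B] that in auto)
    obtain Y lam where co: "cocone C G (S - {A}) Y lam" and W: "\<forall>B\<in>S - {A}. lam B \<in> W"
      using psubset.IH[of "S - {A}"] A b G GW poset_functor_subset[OF G, of "S - {A}"] by auto
    have b': "b \<in> S - {A}" "b \<le> A" "G b A \<in> W" using A b GW by auto
    have "\<exists>D D'. D \<in> S - {A} \<and> D' \<in> S - {A} \<and> D \<le> B \<and> D \<le> D' \<and> b \<le> D' \<and> D' \<le> A \<and>
        G D B \<in> W \<and> G b D' \<in> W" if "B \<in> S - {A}" "B \<le> A" for B
      using that b' b GW by (intro exI[of _ b]) auto
    from cocone_add_maximal[OF psubset.hyps(1) G co _ max b' this] A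
    show ?thesis using W b' by blast
  qed
qed

end

lemma Max_eqI_nat: "A \<subseteq> {0..n::nat} \<Longrightarrow> m \<in> A \<Longrightarrow> (\<And>a. a \<in> A \<Longrightarrow> a \<le> m) \<Longrightarrow> Max A = m"
  by (rule Max_eqI) (auto intro: finite_subset)

lemma finite_Lposet: "finite (Lposet n k)"
  by (rule finite_subset[of _ "Pow {0..n}"]) (auto simp: Lposet_def)

lemma LJ_coatom:
  assumes n: "0 < k" "k < n"
  shows "{0..n - 1} \<in> Lposet n k - {{0..n}}" "n \<notin> {0..n - 1}"
    and "\<And>B. B \<in> Lposet n k - {{0..n}} \<Longrightarrow> {0..n - 1} \<subseteq> B \<Longrightarrow> B = {0..n - 1}"
    and "\<And>A. A \<in> Lposet n k - {{0..n}} - {{0..n - 1}} \<Longrightarrow> insert n A \<in> Lposet n k - {{0..n}}"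
proof -
  have full: "{0..n} = insert n {0..n - 1}" using n by auto
  show nT: "n \<notin> {0..n - 1}" using n by simp
  show "{0..n - 1} \<in> Lposet n k - {{0..n}}" using n nT full by (auto simp: Lposet_def)
  show "B = {0..n - 1}" if "B \<in> Lposet n k - {{0..n}}" "{0..n - 1} \<subseteq> B" for B
  proof -
    have B: "B \<subseteq> insert n {0..n - 1}" "B \<noteq> insert n {0..n - 1}"
      using that(1) full by (auto simp: Lposet_def)
    then have "n \<notin> B" using that(2) by blast
    then show ?thesis using B(1) that(2) by blast
  qed
  show "insert n A \<in> Lposet n k - {{0..n}}" if "A \<in> Lposet n k - {{0..n}} - {{0..n - 1}}" for A
  proof -
    from that have A: "A \<subseteq> {0..n}" "k \<in> A" "A \<noteq> {0..n}" "A \<noteq> {0..n - 1}" by (auto simp: Lposet_def)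
    have "insert n A \<noteq> {0..n}"
    proof (cases "n \<in> A")
      case True
      then show ?thesis using A(3) by (simp add: insert_absorb)
    next
      case False
      then show ?thesis using A(4) nT full by (metis insert_ident)
    qed
    then show ?thesis using A by (auto simp: Lposet_def)
  qed
qed

text \<open>The zigzags needed to adjoin T: B \<supseteq> {k, Max B} \<subseteq> {k, Max B, n-1} \<supseteq> {k, n-1}, where the
  outer inclusions preserve the maximum.\<close>

lemma LJ_zigzag:
  assumes n: "0 < k" "k < n" and B: "B \<in> Lposet n k - {{0..n}} - {{0..n - 1}}" "B \<subseteq> {0..n - 1}"
  shows "\<exists>D D'. D \<in> Lposet n k - {{0..n}} - {{0..n - 1}} \<and> D' \<in> Lposet n k - {{0..n}} - {{0..n - 1}} \<and>
    D \<subseteq> B \<and> D \<subseteq> D' \<and> {k, n - 1} \<subseteq> D' \<and> D' \<subseteq> {0..n - 1} \<and> Max D = Max B \<and> Max D' = n - 1"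
proof -
  have k: "k \<in> B" using B by (simp add: Lposet_def)
  define m where "m = Max B"
  have "finite B" "B \<noteq> {}" using finite_subset[OF B(2)] k by auto
  then have m: "m \<in> B" "k \<le> m" using k Max_in Max_ge unfolding m_def by simp_all
  then have "m \<le> n - 1" using B(2) by auto
  then have "{k, m} \<in> Lposet n k - {{0..n}} - {{0..n - 1}}" "{k, m, n - 1} \<in> Lposet n k - {{0..n}} - {{0..n - 1}}"
    "Max {k, m} = Max B" "Max {k, m, n - 1} = n - 1"
    "{k, m} \<subseteq> B" "{k, m} \<subseteq> {k, m, n - 1}" "{k, n - 1} \<subseteq> {k, m, n - 1}" "{k, m, n - 1} \<subseteq> {0..n - 1}"
    using m n k unfolding m_def by (auto simp: Lposet_def intro!: Max_eqI_nat[of _ n])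
  then show ?thesis by blast
qed

context left_fractions
begin

text \<open>The elements of LJ^n_k containing n have least element {k, n}, and all arrows between them are marked.\<close>

lemma LJ_cocone_top:
  assumes n: "0 < k" "k \<le> n" "2 \<le> n"
    and G: "poset_functor C (Lposet n k - {{0..n}}) (\<le>) G"
    and M: "sends_marked W (Lposet n k - {{0..n}}) (\<le>) (\<lambda>A0 A1. Max A0 = Max A1) G"
  shows "\<exists>Y mu. cocone C G {A \<in> Lposet n k - {{0..n}}. n \<in> A} Y mu \<and>
     (\<forall>A\<in>{A \<in> Lposet n k - {{0..n}}. n \<in> A}. mu A \<in> W)"
proof (rule cocone_all_marked)
  show "finite {A \<in> Lposet n k - {{0..n}}. n \<in> A}" using finite_Lposet by simp
  have "0 \<notin> {k, n}" using n by auto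
  then show "{k, n} \<in> {A \<in> Lposet n k - {{0..n}}. n \<in> A}" using n by (auto simp: Lposet_def)
  show "{k, n} \<le> A" if "A \<in> {A \<in> Lposet n k - {{0..n}}. n \<in> A}" for A
    using that by (simp add: Lposet_def)
  show "poset_functor C {A \<in> Lposet n k - {{0..n}}. n \<in> A} (\<le>) G"
    by (rule poset_functor_subset[OF G]) blast
  show "G A B \<in> W" if "A \<in> {A \<in> Lposet n k - {{0..n}}. n \<in> A}" "B \<in> {A \<in> Lposet n k - {{0..n}}. n \<in> A}" "A \<le> B"
    for A B
  proof -
    have "A \<in> Lposet n k - {{0..n}}" "B \<in> Lposet n k - {{0..n}}" "n \<in> A" "n \<in> B"
      "A \<subseteq> {0..n}" "B \<subseteq> {0..n}"
      using that by (auto simp: Lposet_def)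
    moreover have "Max A = n" "Max B = n"
      using calculation by (auto intro!: Max_eqI_nat[of _ n])
    ultimately show ?thesis
      using M \<open>A \<le> B\<close> unfolding sends_marked_def by auto
  qed
qed


text \<open>For k < n, every A other than T = {0..n-1} maps to insert n A; the missing leg at T is
  supplied by cocone_add_maximal with b = {k, n-1}.\<close>

lemma LJ_cocone_from_top:
  assumes n: "0 < k" "k < n"
    and G: "poset_functor C (Lposet n k - {{0..n}}) (\<le>) G"
    and M: "sends_marked W (Lposet n k - {{0..n}}) (\<le>) (\<lambda>A0 A1. Max A0 = Max A1) G"
    and co: "cocone C G {A \<in> Lposet n k - {{0..n}}. n \<in> A} Y mu"
    and muW: "\<forall>A\<in>{A \<in> Lposet n k - {{0..n}}. n \<in> A}. mu A \<in> W"
  shows "\<exists>Y lam. cocone C G (Lposet n k - {{0..n}}) Y lam \<and> (\<forall>A\<in>Lposet n k - {{0..n}}. n \<in> A \<longrightarrow> lam A \<in> W)"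
proof -
  define L' where "L' = Lposet n k - {{0..n}}"
  define T where "T = {0..n - 1}"
  note T = LJ_coatom[OF n, folded L'_def T_def]
  have co0: "cocone C G (L' - {T}) Y (\<lambda>A. Comp C (mu (insert n A)) (G A (insert n A)))"
    by (rule cocone_pullback[OF G[folded L'_def] co]) (use T(4) in \<open>auto simp: L'_def\<close>)
  have mu_eq: "Comp C (mu (insert n A)) (G A (insert n A)) = mu A" if "A \<in> L'" "n \<in> A" for A
    using that coconeD(3)[OF co, of A A] poset_functor_Id[OF G] by (simp add: insert_absorb L'_def)
  have GW: "G A B \<in> W" if "A \<in> L'" "B \<in> L'" "A \<subseteq> B" "Max A = Max B" for A B
    using M that unfolding sends_marked_def L'_def by blast
  define b where "b = {k, n - 1}"
  have b: "b \<in> L' - {T}" "b \<subseteq> T" "Max b = n - 1" "Max T = n - 1"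
    using n unfolding b_def T_def L'_def by (auto simp: Lposet_def intro: Max_eqI_nat[of _ n])
  have zigzag: "\<exists>D D'. D \<in> L' - {T} \<and> D' \<in> L' - {T} \<and> D \<le> B \<and> D \<le> D' \<and> b \<le> D' \<and> D' \<le> T \<and>
      G D B \<in> W \<and> G b D' \<in> W" if B: "B \<in> L' - {T}" "B \<le> T" for B
  proof -
    obtain D D' where D: "D \<in> L' - {T}" "D' \<in> L' - {T}" "D \<subseteq> B" "D \<subseteq> D'" "b \<subseteq> D'" "D' \<subseteq> T"
      "Max D = Max B" "Max D' = n - 1"
      using LJ_zigzag[OF n B[unfolded L'_def T_def]] unfolding L'_def T_def b_def by blast
    then have "G D B \<in> W" "G b D' \<in> W" using GW B b(1,3) by auto
    with D show ?thesis by blast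
  qed
  have "finite L'" unfolding L'_def using finite_Lposet by simp
  then obtain Y' lam' where co': "cocone C G L' Y' lam'"
    and W': "\<And>B. B \<in> L' - {T} \<Longrightarrow> Comp C (mu (insert n B)) (G B (insert n B)) \<in> W \<Longrightarrow> lam' B \<in> W"
    using cocone_add_maximal[OF _ G[folded L'_def] co0 T(1) T(3) b(1,2) GW[OF _ T(1) b(2)] zigzag] b by auto
  have "lam' A \<in> W" if "A \<in> L'" "n \<in> A" for A
    using W'[of A] mu_eq[OF that] muW that T(2) unfolding L'_def by auto
  with co' show ?thesis unfolding L'_def by blast
qed

lemma LJ_cocone:
  assumes n: "0 < k" "k \<le> n" "2 \<le> n"
    and G: "poset_functor C (Lposet n k - {{0..n}}) (\<le>) G"
    and M: "sends_marked W (Lposet n k - {{0..n}}) (\<le>) (\<lambda>A0 A1. Max A0 = Max A1) G"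
  shows "\<exists>Y lam. cocone C G (Lposet n k - {{0..n}}) Y lam \<and> (\<forall>A\<in>Lposet n k - {{0..n}}. n \<in> A \<longrightarrow> lam A \<in> W)"
proof (cases "k = n")
  case True
  then have "{A \<in> Lposet n k - {{0..n}}. n \<in> A} = Lposet n k - {{0..n}}" by (auto simp: Lposet_def)
  then show ?thesis using LJ_cocone_top[OF n G M] by auto
next
  case False
  with n show ?thesis using LJ_cocone_top[OF n G M] LJ_cocone_from_top[OF _ _ G M] by auto
qed


text \<open>The leg at A of the cocone on LJ^n_k becomes the arrow A \<subseteq> [n]; it has to lie in W exactly
  when Max A = n, i.e. when n \<in> A.\<close>

lemma functors_extend_LJ_L:
  assumes n: "2 \<le> n" "0 < k" "k \<le> n"
  shows "functors_extend C W (Lposet n k - {{0..n}}) (\<subseteq>) (Lposet n k) (\<subseteq>) (\<lambda>A0 A1. Max A0 = Max A1)"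
  unfolding functors_extend_def
proof (intro allI impI, elim conjE)
  fix G assume G: "poset_functor C (Lposet n k - {{0..n}}) (\<subseteq>) G"
    and M: "sends_marked W (Lposet n k - {{0..n}}) (\<subseteq>) (\<lambda>A0 A1. Max A0 = Max A1) G"
  obtain Y lam where co: "cocone C G (Lposet n k - {{0..n}}) Y lam"
    and lamW: "\<And>A. A \<in> Lposet n k - {{0..n}} \<Longrightarrow> n \<in> A \<Longrightarrow> lam A \<in> W"
    using LJ_cocone[OF n(2,3,1) G M] by blast
  have L: "insert {0..n} (Lposet n k - {{0..n}}) = Lposet n k" using n by (auto simp: Lposet_def)
  have top: "A \<subseteq> {0..n}" if "A \<in> Lposet n k" for A using that by (simp add: Lposet_def)
  have "poset_functor C (insert {0..n} (Lposet n k - {{0..n}})) (\<subseteq>) (extend_top G {0..n} Y lam)"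
    by (rule poset_functor_extend_top[OF G co]) (use top in auto)
  then have "poset_functor C (Lposet n k) (\<subseteq>) (extend_top G {0..n} Y lam)"
    by (simp only: L)
  moreover have "sends_marked W (Lposet n k) (\<subseteq>) (\<lambda>A0 A1. Max A0 = Max A1) (extend_top G {0..n} Y lam)"
    unfolding sends_marked_def
  proof (intro ballI impI)
    fix A B assume A: "A \<in> Lposet n k" and B: "B \<in> Lposet n k" and AB: "A \<subseteq> B" and Max: "Max A = Max B"
    show "extend_top G {0..n} Y lam A B \<in> W"
    proof (cases "B = {0..n}")
      case True
      have "Max A \<in> A" using A top[OF A] by (auto simp: Lposet_def intro: Max_in finite_subset)
      moreover have "Max {0..n} = n" by (rule Max_eqI_nat) auto
      ultimately show ?thesis
        using True Max A lamW coconeD(1)[OF co] unfolding extend_top_def by auto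
    next
      case False
      then have "A \<noteq> {0..n}" using AB top[OF B] by blast
      with False A B AB Max M show ?thesis unfolding extend_top_def sends_marked_def by auto
    qed
  qed
  moreover have "extend_top G {0..n} Y lam A B = G A B" if "B \<in> Lposet n k - {{0..n}}" for A B
    using that unfolding extend_top_def by simp
  ultimately show "\<exists>G'. poset_functor C (Lposet n k) (\<subseteq>) G' \<and>
      sends_marked W (Lposet n k) (\<subseteq>) (\<lambda>A0 A1. Max A0 = Max A1) G' \<and>
      (\<forall>A\<in>Lposet n k - {{0..n}}. \<forall>B\<in>Lposet n k - {{0..n}}. A \<subseteq> B \<longrightarrow> G' A B = G A B)"
    by blast
qed

end

section \<open>CLF gives a proper calculus of left fractions\<close>

text \<open>The product order on {0,1}^3, a triple of bits being encoded in binary.\<close>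

definition cube_le :: "nat \<Rightarrow> nat \<Rightarrow> bool" where
  "cube_le x y \<longleftrightarrow> x mod 2 \<le> y mod 2 \<and> (x div 2) mod 2 \<le> (y div 2) mod 2 \<and> x div 4 \<le> y div 4"

text \<open>LJ^2_k and LJ^3_1 embed into the cube by recording which of the listed elements a set contains.\<close>

definition span_code :: "nat \<Rightarrow> nat set \<Rightarrow> nat" where
  "span_code j A = (if 0 \<in> A then 1 else 0) + (if j \<in> A then 2 else 0)"

definition fork_code :: "nat set \<Rightarrow> nat" where
  "fork_code A = (if 0 \<in> A then 1 else 0) + (if 2 \<in> A then 2 else 0) + (if 3 \<in> A then 4 else 0)"

lemma cube_le_span_code: "A \<subseteq> B \<Longrightarrow> cube_le (span_code j A) (span_code j B)"
  and cube_le_fork_code: "A \<subseteq> B \<Longrightarrow> cube_le (fork_code A) (fork_code B)"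
  unfolding cube_le_def span_code_def fork_code_def by (auto split: if_splits)

lemma span_code_range:
  assumes "k \<in> {1, 2}" "A \<in> Lposet 2 k - {{0..2}}"
  shows "span_code (3 - k) A \<in> {0, 1, 2}"
proof -
  have "{0..2} \<subseteq> A" if "0 \<in> A" "3 - k \<in> A"
    using that assms by (auto simp: Lposet_def le_Suc_eq numeral_2_eq_2)
  then show ?thesis using assms unfolding span_code_def Lposet_def by auto
qed

lemma fork_code_range:
  assumes "A \<in> Lposet 3 1 - {{0..3}}"
  shows "fork_code A \<in> {0..6}"
proof -
  have "{0..3} \<subseteq> A" if "0 \<in> A" "2 \<in> A" "3 \<in> A"
    using that assms by (auto simp: Lposet_def le_Suc_eq numeral_3_eq_3 numeral_2_eq_2)
  then show ?thesis using assms unfolding fork_code_def Lposet_def by auto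
qed

lemma Max_neq_if_new_maximum:
  assumes "finite B" "A \<subseteq> B" "A \<noteq> {}" "x \<in> B" "\<And>a. a \<in> A \<Longrightarrow> a < x"
  shows "Max A \<noteq> Max B"
proof -
  have "Max A < x" using assms Max_in[of A] finite_subset by blast
  also have "x \<le> Max B" using assms by simp
  finally show ?thesis by simp
qed

context marked_cat
begin

definition span_diagram :: "'a \<Rightarrow> 'a \<Rightarrow> nat \<Rightarrow> nat \<Rightarrow> 'a" where
  "span_diagram w f x y =
     (if x = y then Id C (if x = 0 then Dom C w else if x = 1 then Cod C w else Cod C f)
      else if y = 1 then w else f)"

lemma poset_functor_span_diagram:
  assumes "w \<in> Arr C" "f \<in> Arr C" "Dom C f = Dom C w"
  shows "poset_functor C {0, 1, 2} cube_le (span_diagram w f)"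
proof (rule poset_functor_no_composites)
  fix x y z :: nat assume "x \<in> {0, 1, 2}" "y \<in> {0, 1, 2}" "z \<in> {0, 1, 2}" "cube_le x y" "cube_le y z"
  then show "x = y \<or> y = z" unfolding cube_le_def by auto
next
  fix x y :: nat assume "x \<in> {0, 1, 2}" "y \<in> {0, 1, 2}" "cube_le x y"
  then have "x = y \<or> (x = 0 \<and> y \<noteq> 0)" unfolding cube_le_def by auto
  then show "span_diagram w f x y \<in> Arr C \<and>
      Dom C (span_diagram w f x y) = (if x = 0 then Dom C w else if x = 1 then Cod C w else Cod C f) \<and>
      Cod C (span_diagram w f x y) = (if y = 0 then Dom C w else if y = 1 then Cod C w else Cod C f)"
    using assms Dom_in_Obj Cod_in_Obj \<open>y \<in> {0, 1, 2}\<close> unfolding span_diagram_def by auto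
qed (use assms Dom_in_Obj Cod_in_Obj in \<open>auto simp: span_diagram_def\<close>)

lemma marked_span_functor:
  assumes k: "k \<in> {1, 2}" and f: "f \<in> Arr C" and w: "w \<in> W" "Dom C f = Dom C w" and fW: "k = 2 \<Longrightarrow> f \<in> W"
  defines "G \<equiv> \<lambda>A B. span_diagram w f (span_code (3 - k) A) (span_code (3 - k) B)"
  shows "poset_functor C (Lposet 2 k - {{0..2}}) (\<subseteq>) G"
    and "sends_marked W (Lposet 2 k - {{0..2}}) (\<subseteq>) (\<lambda>A0 A1. Max A0 = Max A1) G"
proof -
  define j where "j = 3 - k"
  define L' where "L' = Lposet 2 k - {{0..2}}"
  show "poset_functor C (Lposet 2 k - {{0..2}}) (\<subseteq>) G"
    unfolding G_def
  proof (rule poset_functor_pullback[OF poset_functor_span_diagram[OF W_in_ArrI[OF w(1)] f w(2)]])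
    show "\<forall>A\<in>Lposet 2 k - {{0..2}}. span_code (3 - k) A \<in> {0, 1, 2}" using span_code_range[OF k] by simp
  qed (simp add: cube_le_span_code)
  show "sends_marked W (Lposet 2 k - {{0..2}}) (\<subseteq>) (\<lambda>A0 A1. Max A0 = Max A1) G"
    unfolding sends_marked_def G_def j_def[symmetric]
  proof (intro ballI impI)
    fix A B assume A: "A \<in> Lposet 2 k - {{0..2}}" and B: "B \<in> Lposet 2 k - {{0..2}}" and AB: "A \<subseteq> B"
      and Max: "Max A = Max B"
    have codes: "span_code j A \<in> {0, 1, 2}" "span_code j B \<in> {0, 1, 2}"
      using span_code_range[OF k] A B unfolding j_def by auto
    show "span_diagram w f (span_code j A) (span_code j B) \<in> W"
    proof (cases "span_code j A = 0 \<and> span_code j B = 2")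
      case True
      have "k = 2"
      proof (rule ccontr)
        assume "k \<noteq> 2"
        then have "j = 2" "2 \<notin> A" "2 \<in> B" "A \<subseteq> {0..2}" "B \<subseteq> {0..2}" "A \<noteq> {}"
          using True A B k unfolding j_def span_code_def Lposet_def by (auto split: if_splits)
        moreover have "a < 2" if "a \<in> A" for a
        proof -
          have "a \<le> 2" "a \<noteq> 2" using that calculation(2,4) by auto
          then show ?thesis by simp
        qed
        ultimately show False
          using Max_neq_if_new_maximum[OF finite_subset AB, of "{0..2}" 2] Max by auto
      qed
      then show ?thesis using True fW unfolding span_diagram_def by simp
    next
      case False
      then have "span_code j A = span_code j B \<or> span_code j B = 1"
        using codes cube_le_span_code[OF AB, of j] unfolding cube_le_def by auto
      moreover have "Id C X \<in> W" if "X \<in> {Dom C w, Cod C w, Cod C f}" for X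
        using that w f Dom_in_Obj Cod_in_Obj by auto
      ultimately show ?thesis using w unfolding span_diagram_def by auto
    qed
  qed
qed

text \<open>The Ore square is read off at the top [2] of L^2_k; for k = 2 the new arrow {0, 2} \<subseteq> [2]
  is marked, which gives the properness clause.\<close>

lemma Ore_square_of_extension:
  assumes k: "k \<in> {1, 2}"
    and F: "functors_extend C W (Lposet 2 k - {{0..2}}) (\<subseteq>) (Lposet 2 k) (\<subseteq>) (\<lambda>A0 A1. Max A0 = Max A1)"
    and f: "f \<in> Arr C" and w: "w \<in> W" "Dom C f = Dom C w" and fW: "k = 2 \<Longrightarrow> f \<in> W"
  shows "\<exists>f' w'. f' \<in> Arr C \<and> w' \<in> W \<and> Dom C f' = Cod C w \<and> Dom C w' = Cod C f \<and>
     Cod C f' = Cod C w' \<and> Comp C f' w = Comp C w' f \<and> (k = 2 \<longrightarrow> f' \<in> W)"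
proof -
  define j where "j = 3 - k"
  define L' where "L' = Lposet 2 k - {{0..2}}"
  define G where "G = (\<lambda>A B. span_diagram w f (span_code j A) (span_code j B))"
  have jk: "{k, j} = {1, 2}" using k unfolding j_def by auto
  have GF: "poset_functor C (Lposet 2 k - {{0..2}}) (\<subseteq>) G"
    unfolding G_def j_def by (rule marked_span_functor(1)[OF k f w fW])
  have GM: "sends_marked W (Lposet 2 k - {{0..2}}) (\<subseteq>) (\<lambda>A0 A1. Max A0 = Max A1) G"
    unfolding G_def j_def by (rule marked_span_functor(2)[OF k f w fW])
  obtain G' where G': "poset_functor C (Lposet 2 k) (\<subseteq>) G'"
    and M': "sends_marked W (Lposet 2 k) (\<subseteq>) (\<lambda>A0 A1. Max A0 = Max A1) G'"
    and agree: "\<And>A B. A \<in> L' \<Longrightarrow> B \<in> L' \<Longrightarrow> A \<subseteq> B \<Longrightarrow> G' A B = G A B"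
    using functors_extendD[OF F GF GM] unfolding L'_def by blast
  define N where "N = {0..2::nat}"
  have kj: "k \<noteq> 0" "j \<noteq> 0" "k \<noteq> j" "k \<le> 2" "j \<le> 2" using k by (auto simp: j_def)
  have N_eq: "N = {0, k, j}" using k unfolding N_def j_def by auto
  have "j \<notin> {0, k}" "0 \<notin> {k, j}" using kj by auto
  then have "{k} \<noteq> {0, k, j}" "{0, k} \<noteq> {0, k, j}" "{k, j} \<noteq> {0, k, j}" by blast+
  then have sets: "{k} \<in> L'" "{0, k} \<in> L'" "{k, j} \<in> L'" "N \<in> Lposet 2 k"
    unfolding L'_def Lposet_def N_eq[unfolded N_def] N_eq by auto
  have P: "{k} \<in> Lposet 2 k" "{0, k} \<in> Lposet 2 k" "{k, j} \<in> Lposet 2 k"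
    using sets unfolding L'_def by auto
  have codes: "span_code j {k} = 0" "span_code j {0, k} = 1" "span_code j {k, j} = 2"
    using kj unfolding span_code_def by auto
  have top: "{0, k} \<subseteq> N" "{k, j} \<subseteq> N" unfolding N_eq by auto
  have "Comp C (G' {0, k} N) w = G' {k} N" "Comp C (G' {k, j} N) f = G' {k} N"
    using poset_functor_Comp[OF G' P(1) P(2) sets(4)] poset_functor_Comp[OF G' P(1) P(3) sets(4)]
      agree[OF sets(1,2)] agree[OF sets(1,3)] codes top unfolding G_def span_diagram_def by auto
  moreover have "Dom C (G' {0, k} N) = Cod C w" "Dom C (G' {k, j} N) = Cod C f"
    using poset_functor_Dom[OF G' P(2) sets(4)] poset_functor_Dom[OF G' P(3) sets(4)]
      agree[OF sets(2,2)] agree[OF sets(3,3)] codes top w f Cod_in_Obj unfolding G_def span_diagram_def by auto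
  moreover have "Cod C (G' {0, k} N) = Cod C (G' {k, j} N)"
    using poset_functor_Cod[OF G' P(2) sets(4)] poset_functor_Cod[OF G' P(3) sets(4)] top by simp
  moreover have "Max N = 2" "Max {k, j} = 2" "k = 2 \<Longrightarrow> Max {0, k} = 2"
    using jk kj unfolding N_def by (auto intro: Max_eqI_nat[of _ 2])
  then have "G' {k, j} N \<in> W" "k = 2 \<Longrightarrow> G' {0, k} N \<in> W"
    using M' P sets(4) top unfolding sends_marked_def by auto
  ultimately show ?thesis
    using poset_functor_in_Arr[OF G' P(2) sets(4)] top by (intro exI[of _ "G' {0, k} N"] exI[of _ "G' {k, j} N"]) auto
qed


text \<open>The diagram on the codes 0..6 of {1}, {0,1}, {1,2}, {0,1,2}, {1,3}, {0,1,3}, {1,2,3}: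
  w out of {1}, f from {0,1} to {0,1,3}, g from {1,2} to {1,2,3}, identities otherwise.\<close>

definition fork_obj where
  "fork_obj w f x = (if x = 0 then Dom C w else if x < 4 then Cod C w else Cod C f)"

definition fork_diagram :: "'a \<Rightarrow> 'a \<Rightarrow> 'a \<Rightarrow> nat \<Rightarrow> nat \<Rightarrow> 'a" where
  "fork_diagram w f g x y =
     (if x = y then Id C (fork_obj w f x)
      else if x = 0 then (if 4 \<le> y then Comp C f w else w)
      else if 4 \<le> x \<or> y < 4 then Id C (fork_obj w f x)
      else if x = 1 then f else g)"

lemma cube_le_cases:
  assumes "x \<in> {0..6}" "y \<in> {0..6}" "cube_le x y"
  shows "x = y \<or> (x = 0 \<and> 1 \<le> y \<and> y < 4) \<or> (x = 0 \<and> 4 \<le> y) \<or> (4 \<le> x \<and> 4 \<le> y) \<or>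
    (1 \<le> x \<and> x < 4 \<and> 1 \<le> y \<and> y < 4) \<or> (x = 1 \<and> y = 5) \<or> (x = 2 \<and> y = 6)"
proof -
  have "x \<in> {0, 1, 2, 3, 4, 5, 6}" "y \<in> {0, 1, 2, 3, 4, 5, 6}" using assms(1,2) by auto
  then show ?thesis using assms(3) unfolding cube_le_def by (elim insertE emptyE; simp)
qed

lemma cube_le_chain_cases:
  assumes "x \<in> {0..6}" "y \<in> {0..6}" "z \<in> {0..6}" "cube_le x y" "cube_le y z"
  shows "x = y \<or> y = z \<or> (x = 0 \<and> y = 1 \<and> z = 3) \<or> (x = 0 \<and> y = 1 \<and> z = 5) \<or>
    (x = 0 \<and> y = 2 \<and> z = 3) \<or> (x = 0 \<and> y = 2 \<and> z = 6) \<or> (x = 0 \<and> y = 4 \<and> z = 5) \<or> (x = 0 \<and> y = 4 \<and> z = 6)"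
proof -
  have "x \<in> {0, 1, 2, 3, 4, 5, 6}" "y \<in> {0, 1, 2, 3, 4, 5, 6}" "z \<in> {0, 1, 2, 3, 4, 5, 6}"
    using assms(1-3) by auto
  then show ?thesis using assms(4,5) unfolding cube_le_def by (elim insertE emptyE; simp)
qed

lemma poset_functor_fork_diagram:
  assumes w: "w \<in> Arr C" and f: "f \<in> Hom C (Cod C w) Z" and g: "g \<in> Hom C (Cod C w) Z"
    and eq: "Comp C f w = Comp C g w"
  shows "poset_functor C {0..6} cube_le (fork_diagram w f g)"
proof -
  have obj: "fork_obj w f x \<in> Obj C" for x
    using w f Dom_in_Obj Cod_in_Obj unfolding fork_obj_def Hom_def by auto
  have fw: "Comp C f w \<in> Hom C (Dom C w) Z" using Comp_in_Hom[OF _ f] w by (simp add: Hom_def)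
  have diag: "fork_diagram w f g x x = Id C (fork_obj w f x)" for x
    by (simp add: fork_diagram_def)
  have arr: "fork_diagram w f g x y \<in> Hom C (fork_obj w f x) (fork_obj w f y)"
    if "x \<in> {0..6}" "y \<in> {0..6}" "cube_le x y" for x y
    using cube_le_cases[OF that] w f g fw obj[of x] Id_in_Hom
    unfolding fork_diagram_def fork_obj_def Hom_def by (elim disjE conjE) auto
  show ?thesis
    unfolding poset_functor_def
  proof (intro conjI ballI impI)
    fix x y z :: nat assume xyz: "x \<in> {0..6}" "y \<in> {0..6}" "z \<in> {0..6}"
      and le: "cube_le x y" "cube_le y z" "cube_le x z"
    from cube_le_chain_cases[OF xyz le(1,2)] arr[OF xyz(1,3) le(3)]
    show "Comp C (fork_diagram w f g y z) (fork_diagram w f g x y) = fork_diagram w f g x z"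
      using w fw eq Comp_Id_Hom[of w "Dom C w" "Cod C w"] Comp_Id_Hom(2)[OF fw]
      by (elim disjE conjE) (auto simp: diag Comp_Id_Hom fork_diagram_def fork_obj_def Hom_def)
  qed (use diag arr in \<open>auto simp: Hom_def obj\<close>)
qed


lemma fork_diagram_in_W:
  assumes "w \<in> W" "f \<in> Arr C" "x \<in> {0..6}" "y \<in> {0..6}" "cube_le x y" "\<not> (x < 4 \<and> 4 \<le> y)"
  shows "fork_diagram w f g x y \<in> W"
proof -
  have "x = y \<or> (x = 0 \<and> 1 \<le> y \<and> y < 4) \<or> (4 \<le> x \<and> 4 \<le> y) \<or> (1 \<le> x \<and> x < 4 \<and> 1 \<le> y \<and> y < 4)"
    using cube_le_cases[OF assms(3-5)] assms(6) by auto
  moreover have "Id C (fork_obj w f x) \<in> W"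
    using assms(1,2) Dom_in_Obj Cod_in_Obj unfolding fork_obj_def by auto
  ultimately show ?thesis using assms(1) unfolding fork_diagram_def by auto
qed

lemma marked_fork_functor:
  assumes f: "f \<in> Arr C" and g: "g \<in> Arr C" and fg: "Dom C f = Dom C g" "Cod C f = Cod C g"
    and w: "w \<in> W" "Cod C w = Dom C f" and eq: "Comp C f w = Comp C g w"
  defines "G \<equiv> \<lambda>A B. fork_diagram w f g (fork_code A) (fork_code B)"
  shows "poset_functor C (Lposet 3 1 - {{0..3}}) (\<subseteq>) G"
    and "sends_marked W (Lposet 3 1 - {{0..3}}) (\<subseteq>) (\<lambda>A0 A1. Max A0 = Max A1) G"
proof -
  have fh: "f \<in> Hom C (Cod C w) (Cod C f)" and gh: "g \<in> Hom C (Cod C w) (Cod C f)"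
    using f g fg w by (simp_all add: Hom_def)
  show "poset_functor C (Lposet 3 1 - {{0..3}}) (\<subseteq>) G"
    unfolding G_def
  proof (rule poset_functor_pullback[OF poset_functor_fork_diagram[OF W_in_ArrI[OF w(1)] fh gh eq]])
    show "\<forall>A\<in>Lposet 3 1 - {{0..3}}. fork_code A \<in> {0..6}" using fork_code_range by simp
  qed (simp add: cube_le_fork_code)
  show "sends_marked W (Lposet 3 1 - {{0..3}}) (\<subseteq>) (\<lambda>A0 A1. Max A0 = Max A1) G"
    unfolding sends_marked_def
  proof (intro ballI impI)
    fix A B assume A: "A \<in> Lposet 3 1 - {{0..3}}" and B: "B \<in> Lposet 3 1 - {{0..3}}" and AB: "A \<subseteq> B"
      and Max: "Max A = Max B"
    have AB3: "A \<subseteq> {0..3}" "B \<subseteq> {0..3}" "A \<noteq> {}" using A B by (auto simp: Lposet_def)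
    have "\<not> (3 \<notin> A \<and> 3 \<in> B)"
    proof
      assume 3: "3 \<notin> A \<and> 3 \<in> B"
      have "a < 3" if "a \<in> A" for a
      proof -
        have "a \<le> 3" "a \<noteq> 3" using that 3 AB3 by auto
        then show ?thesis by simp
      qed
      then show False using Max_neq_if_new_maximum[OF finite_subset[OF AB3(2)] AB AB3(3), of 3] 3 Max by auto
    qed
    then have "\<not> (fork_code A < 4 \<and> 4 \<le> fork_code B)" unfolding fork_code_def by auto
    then show "G A B \<in> W"
      unfolding G_def using fork_diagram_in_W[OF w(1) f] fork_code_range A B cube_le_fork_code[OF AB]
      by simp
  qed
qed

text \<open>With v the marked arrow {1, 3} \<subseteq> [3], both v f and v g equal the arrow {0, 1, 2} \<subseteq> [3].\<close>

lemma cancel_of_extension: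
  assumes F: "functors_extend C W (Lposet 3 1 - {{0..3}}) (\<subseteq>) (Lposet 3 1) (\<subseteq>) (\<lambda>A0 A1. Max A0 = Max A1)"
    and f: "f \<in> Arr C" and g: "g \<in> Arr C" and fg: "Dom C f = Dom C g" "Cod C f = Cod C g"
    and w: "w \<in> W" "Cod C w = Dom C f" and eq: "Comp C f w = Comp C g w"
  shows "\<exists>v\<in>W. Dom C v = Cod C f \<and> Comp C v f = Comp C v g"
proof -
  define L' where "L' = Lposet 3 1 - {{0..3}}"
  define G where "G = (\<lambda>A B. fork_diagram w f g (fork_code A) (fork_code B))"
  have GF: "poset_functor C (Lposet 3 1 - {{0..3}}) (\<subseteq>) G"
    unfolding G_def by (rule marked_fork_functor(1)[OF f g fg w eq])
  have GM: "sends_marked W (Lposet 3 1 - {{0..3}}) (\<subseteq>) (\<lambda>A0 A1. Max A0 = Max A1) G"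
    unfolding G_def by (rule marked_fork_functor(2)[OF f g fg w eq])
  obtain G' where G': "poset_functor C (Lposet 3 1) (\<subseteq>) G'"
    and M': "sends_marked W (Lposet 3 1) (\<subseteq>) (\<lambda>A0 A1. Max A0 = Max A1) G'"
    and agree: "\<And>A B. A \<in> L' \<Longrightarrow> B \<in> L' \<Longrightarrow> A \<subseteq> B \<Longrightarrow> G' A B = G A B"
    using functors_extendD[OF F GF GM] unfolding L'_def by blast
  define N where "N = {0..3::nat}"
  have N: "N \<in> Lposet 3 1" "N \<notin> L'" by (auto simp: N_def L'_def Lposet_def)
  have missing: "X \<noteq> {0..3}" if "x \<le> 3" "x \<notin> X" for X and x :: nat
    using that by auto
  have sets: "{1, 3} \<in> L'" "{0, 1, 3} \<in> L'" "{1, 2, 3} \<in> L'" "{0, 1} \<in> L'" "{1, 2} \<in> L'" "{0, 1, 2} \<in> L'"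
    unfolding L'_def Lposet_def
    using missing[of 0 "{1, 3}"] missing[of 2 "{0, 1, 3}"] missing[of 0 "{1, 2, 3}"]
      missing[of 2 "{0, 1}"] missing[of 0 "{1, 2}"] missing[of 3 "{0, 1, 2}"] by simp_all
  have to_top: "G' A N = Comp C (G' B N) (G A B)" if "A \<in> L'" "B \<in> L'" "A \<subseteq> B" for A B
    using poset_functor_Comp[OF G', of A B N] agree[OF that] that N unfolding L'_def Lposet_def N_def by auto
  have G'_Hom: "G' A N \<in> Hom C (Dom C (G A A)) (Dom C (G' N N))" if "A \<in> L'" for A
    using poset_functor_Hom[OF G', of A N] agree[of A A] that N unfolding L'_def Lposet_def N_def by auto
  have codes: "fork_code {1, 3} = 4" "fork_code {0, 1, 3} = 5" "fork_code {1, 2, 3} = 6"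
    "fork_code {0, 1} = 1" "fork_code {1, 2} = 2" "fork_code {0, 1, 2} = 3"
    unfolding fork_code_def by auto
  have objs: "Dom C (G {1, 3} {1, 3}) = Cod C f" "Dom C (G {0, 1, 2} {0, 1, 2}) = Cod C w"
    "Dom C (G {0, 1, 3} {0, 1, 3}) = Cod C f" "Dom C (G {1, 2, 3} {1, 2, 3}) = Cod C f"
    using f Cod_in_Obj W_in_ArrI[OF w(1)] codes unfolding G_def fork_diagram_def fork_obj_def by auto
  have G_values: "G {1, 3} {0, 1, 3} = Id C (Cod C f)" "G {1, 3} {1, 2, 3} = Id C (Cod C f)"
    "G {0, 1} {0, 1, 2} = Id C (Cod C w)" "G {1, 2} {0, 1, 2} = Id C (Cod C w)"
    "G {0, 1} {0, 1, 3} = f" "G {1, 2} {1, 2, 3} = g"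
    using codes unfolding G_def fork_diagram_def fork_obj_def by simp_all
  have ids: "Comp C (G' {0, 1, 3} N) (Id C (Cod C f)) = G' {0, 1, 3} N"
    "Comp C (G' {1, 2, 3} N) (Id C (Cod C f)) = G' {1, 2, 3} N"
    "Comp C (G' {0, 1, 2} N) (Id C (Cod C w)) = G' {0, 1, 2} N"
    using Comp_Id_Hom(1)[OF G'_Hom[OF sets(2)]] Comp_Id_Hom(1)[OF G'_Hom[OF sets(3)]]
      Comp_Id_Hom(1)[OF G'_Hom[OF sets(6)]] objs by simp_all
  define v where "v = G' {1, 3} N"
  have "Comp C v f = G' {0, 1} N"
    using to_top[OF sets(1,2)] to_top[OF sets(4,2)] G_values ids unfolding v_def by simp
  also have "\<dots> = G' {1, 2} N"
    using to_top[OF sets(4,6)] to_top[OF sets(5,6)] G_values ids by simp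
  also have "\<dots> = Comp C v g"
    using to_top[OF sets(1,3)] to_top[OF sets(5,3)] G_values ids unfolding v_def by simp
  finally have "Comp C v f = Comp C v g" .
  moreover have "v \<in> W"
    using M' N(1) sets(1) Max_eqI_nat[of "{1, 3}" 3 3] Max_eqI_nat[of N 3 3]
    unfolding v_def sends_marked_def L'_def N_def by auto
  moreover have "Dom C v = Cod C f" using G'_Hom[OF sets(1)] objs unfolding v_def Hom_def by simp
  ultimately show ?thesis by blast
qed

end

lemma proper_left_fractions_iff_CLF:
  assumes C: "category C" and W: "W \<subseteq> Arr C" "\<forall>x\<in>Obj C. Id C x \<in> W"
  shows "proper_left_fractions C W \<longleftrightarrow> CLF (cnerve C) (nmark C W)"
proof -
  interpret marked_cat C W using assms by unfold_locales auto
  show ?thesis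
  proof
    assume "proper_left_fractions C W"
    then interpret left_fractions C W by unfold_locales
    have "closed_under_Comp C W" using Comp_in_W unfolding closed_under_Comp_def by blast
    then show "CLF (cnerve C) (nmark C W)"
      unfolding CLF_iff_functors_extend functors_extend_horn_iff_closed_under_Comp
      using functors_extend_LJ_L by blast
  next
    assume "CLF (cnerve C) (nmark C W)"
    then have closed: "closed_under_Comp C W"
      and F: "\<And>n k. 2 \<le> n \<Longrightarrow> 0 < k \<Longrightarrow> k \<le> n \<Longrightarrow>
        functors_extend C W (Lposet n k - {{0..n}}) (\<subseteq>) (Lposet n k) (\<subseteq>) (\<lambda>A0 A1. Max A0 = Max A1)"
      unfolding CLF_iff_functors_extend functors_extend_horn_iff_closed_under_Comp by blast+
    have "\<exists>f' w'. f' \<in> Arr C \<and> w' \<in> W \<and> Dom C f' = Cod C w \<and> Dom C w' = Cod C f \<and>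
        Cod C f' = Cod C w' \<and> Comp C f' w = Comp C w' f \<and> (f \<in> W \<longrightarrow> f' \<in> W)"
      if "f \<in> Arr C" "w \<in> W" "Dom C f = Dom C w" for f w
    proof (cases "f \<in> W")
      case True
      then show ?thesis using Ore_square_of_extension[of 2, OF _ F that] by auto
    next
      case False
      then show ?thesis using Ore_square_of_extension[of 1, OF _ F that] by auto
    qed
    then show "proper_left_fractions C W"
      using W(2) closed cancel_of_extension[OF F[of 3 1]]
      unfolding proper_left_fractions_def closed_under_Comp_def by auto
  qed
qed

section \<open>Duality\<close>

lemma op_cat_simps [simp]:
  "Obj (op_cat C) = Obj C" "Arr (op_cat C) = Arr C" "Dom (op_cat C) = Cod C"
  "Cod (op_cat C) = Dom C" "Id (op_cat C) = Id C" "Comp (op_cat C) g f = Comp C f g"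
  by (simp_all add: op_cat_def)

lemma op_cat_op_cat [simp]: "op_cat (op_cat C) = C"
  by (cases C) (simp add: op_cat_def)

lemma category_op_cat: "category C \<Longrightarrow> category (op_cat C)"
  unfolding category_def by (simp add: op_cat_def)

lemma (in cat) poset_functor_op_cat:
  assumes G: "poset_functor C P le G"
  shows "poset_functor (op_cat C) P (\<lambda>A B. le B A) (\<lambda>A B. G B A)"
proof -
  have Cod_Dom: "Cod C (G A A) = Dom C (G A A)" if "A \<in> P" for A
    using poset_functor_Id[OF G that] Dom_in_Obj[OF poset_functor_Id_in_Arr[OF G that]] by (metis Cod_Id)
  show ?thesis
    unfolding poset_functor_def op_cat_simps
  proof (intro conjI ballI impI)
    fix A assume A: "A \<in> P"
    show "G A A \<in> Arr C" "G A A = Id C (Cod C (G A A))"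
      using poset_functor_Id_in_Arr[OF G A] poset_functor_Id[OF G A] Cod_Dom[OF A] by simp_all
  next
    fix A B assume "A \<in> P" "B \<in> P" "le B A"
    then show "G B A \<in> Arr C" "Cod C (G B A) = Cod C (G A A)" "Dom C (G B A) = Cod C (G B B)"
      using poset_functor_in_Arr[OF G] poset_functor_Cod[OF G] poset_functor_Dom[OF G] Cod_Dom by simp_all
  next
    fix A B D assume "A \<in> P" "B \<in> P" "D \<in> P" "le B A" "le D B" "le D A"
    then show "Comp C (G B A) (G D B) = G D A" using poset_functor_Comp[OF G] by blast
  qed
qed

lemma functors_extend_op_cat:
  assumes C: "category C" and F: "functors_extend C W P' le' P le Q"
  shows "functors_extend (op_cat C) W P' (\<lambda>A B. le' B A) P (\<lambda>A B. le B A) (\<lambda>A B. Q B A)"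
  unfolding functors_extend_def
proof (intro allI impI, elim conjE)
  interpret cat C by unfold_locales (rule C)
  interpret op: cat "op_cat C" by unfold_locales (rule category_op_cat[OF C])
  fix G assume G: "poset_functor (op_cat C) P' (\<lambda>A B. le' B A) G"
    and M: "sends_marked W P' (\<lambda>A B. le' B A) (\<lambda>A B. Q B A) G"
  obtain G' where G': "poset_functor C P le G'" "sends_marked W P le Q G'"
    and agree: "\<And>A B. A \<in> P' \<Longrightarrow> B \<in> P' \<Longrightarrow> le' A B \<Longrightarrow> G' A B = G B A"
    using functors_extendD[OF F op.poset_functor_op_cat[OF G, unfolded op_cat_op_cat]] M
    unfolding sends_marked_def by blast
  then show "\<exists>G'. poset_functor (op_cat C) P (\<lambda>A B. le B A) G' \<and>
      sends_marked W P (\<lambda>A B. le B A) (\<lambda>A B. Q B A) G' \<and> (\<forall>A\<in>P'. \<forall>B\<in>P'. le' B A \<longrightarrow> G' A B = G A B)"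
    using poset_functor_op_cat[OF G'(1)] unfolding sends_marked_def
    by (intro exI[of _ "\<lambda>A B. G' B A"]) auto
qed

lemma functors_extend_op_cat_iff:
  "category C \<Longrightarrow> functors_extend (op_cat C) W P' (\<lambda>A B. le' B A) P (\<lambda>A B. le B A) (\<lambda>A B. Q B A) \<longleftrightarrow>
    functors_extend C W P' le' P le Q"
  using functors_extend_op_cat[of C] functors_extend_op_cat[of "op_cat C"] category_op_cat by fastforce


lemma functors_extend_involution:
  assumes F: "functors_extend C W P' le P le Q"
    and maps: "\<And>A. A \<in> P \<Longrightarrow> phi A \<in> P2" "\<And>B. B \<in> P2 \<Longrightarrow> phi B \<in> P"
    and inv: "\<And>A. A \<in> P \<Longrightarrow> phi (phi A) = A" "\<And>B. B \<in> P2 \<Longrightarrow> phi (phi B) = B"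
    and sub: "P' \<subseteq> P" "P2' \<subseteq> P2" "\<And>A. A \<in> P \<Longrightarrow> A \<in> P' \<longleftrightarrow> phi A \<in> P2'"
    and le: "\<And>A B. A \<in> P \<Longrightarrow> B \<in> P \<Longrightarrow> le A B \<longleftrightarrow> le2 (phi A) (phi B)"
    and Q: "\<And>A B. A \<in> P \<Longrightarrow> B \<in> P \<Longrightarrow> Q A B \<longleftrightarrow> Q2 (phi A) (phi B)"
  shows "functors_extend C W P2' le2 P2 le2 Q2"
  unfolding functors_extend_def
proof (intro allI impI, elim conjE)
  fix G assume G: "poset_functor C P2' le2 G" and M: "sends_marked W P2' le2 Q2 G"
  have to_P2': "phi A \<in> P2'" if "A \<in> P'" for A using that sub by blast
  have to_P': "phi X \<in> P'" if "X \<in> P2'" for X using that sub maps inv by (metis subsetD)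
  have le2: "le (phi X) (phi Y) \<longleftrightarrow> le2 X Y" if "X \<in> P2" "Y \<in> P2" for X Y
    using le[OF maps(2)[OF that(1)] maps(2)[OF that(2)]] inv(2) that by simp
  have Q2: "Q (phi X) (phi Y) \<longleftrightarrow> Q2 X Y" if "X \<in> P2" "Y \<in> P2" for X Y
    using Q[OF maps(2)[OF that(1)] maps(2)[OF that(2)]] inv(2) that by simp
  have G1: "poset_functor C P' le (\<lambda>A B. G (phi A) (phi B))"
    by (rule poset_functor_pullback[OF G]) (use to_P2' le sub in blast)+
  have M1: "sends_marked W P' le Q (\<lambda>A B. G (phi A) (phi B))"
    by (rule sends_marked_pullback[OF M]) (use to_P2' le Q sub in blast)+
  obtain G' where G': "poset_functor C P le G'" "sends_marked W P le Q G'"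
    and agree: "\<And>A B. A \<in> P' \<Longrightarrow> B \<in> P' \<Longrightarrow> le A B \<Longrightarrow> G' A B = G (phi A) (phi B)"
    using functors_extendD[OF F G1 M1] by blast
  have "poset_functor C P2 le2 (\<lambda>X Y. G' (phi X) (phi Y))"
    by (rule poset_functor_pullback[OF G'(1)]) (use maps le2 in blast)+
  moreover have "sends_marked W P2 le2 Q2 (\<lambda>X Y. G' (phi X) (phi Y))"
    by (rule sends_marked_pullback[OF G'(2)]) (use maps le2 Q2 in blast)+
  moreover have "G' (phi X) (phi Y) = G X Y" if "X \<in> P2'" "Y \<in> P2'" "le2 X Y" for X Y
  proof -
    have XY: "X \<in> P2" "Y \<in> P2" using that sub by auto
    then have "le (phi X) (phi Y)" using le2 that(3) by simp
    then show ?thesis using agree[OF to_P'[OF that(1)] to_P'[OF that(2)]] inv(2) XY by simp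
  qed
  ultimately show "\<exists>G'. poset_functor C P2 le2 G' \<and> sends_marked W P2 le2 Q2 G' \<and>
      (\<forall>X\<in>P2'. \<forall>Y\<in>P2'. le2 X Y \<longrightarrow> G' X Y = G X Y)"
    by blast
qed

definition reflect :: "nat \<Rightarrow> nat set \<Rightarrow> nat set" where
  "reflect n A = (\<lambda>a. n - a) ` A"

lemma reflect_reflect:
  assumes "A \<subseteq> {0..n}"
  shows "reflect n (reflect n A) = A"
proof -
  have "(\<lambda>a. n - (n - a)) ` A = id ` A" by (rule image_cong) (use assms in auto)
  then show ?thesis by (simp add: reflect_def image_image)
qed

lemma reflect_subset_iff: "A \<subseteq> {0..n} \<Longrightarrow> B \<subseteq> {0..n} \<Longrightarrow> reflect n A \<subseteq> reflect n B \<longleftrightarrow> A \<subseteq> B"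
  by (metis image_mono reflect_def reflect_reflect)

lemma reflect_atLeastAtMost: "reflect n {0..n} = {0..n}"
proof -
  have "x \<in> reflect n {0..n}" if "x \<le> n" for x
    unfolding reflect_def using that by (intro image_eqI[of x _ "n - x"]) auto
  then show ?thesis unfolding reflect_def by auto
qed

lemma reflect_in_Lposet: "k \<le> n \<Longrightarrow> A \<in> Lposet n k \<Longrightarrow> reflect n A \<in> Lposet n (n - k)"
  unfolding Lposet_def reflect_def by auto

lemma Max_reflect: "A \<subseteq> {0..n} \<Longrightarrow> A \<noteq> {} \<Longrightarrow> Max (reflect n A) = n - Min A"
  unfolding reflect_def using finite_subset[of A "{0..n}"]
  by (intro Max_eqI) (auto intro: diff_le_mono2)

lemma Lposet_subset: "A \<in> Lposet n k \<Longrightarrow> A \<subseteq> {0..n}"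
  and Lposet_nonempty: "A \<in> Lposet n k \<Longrightarrow> A \<noteq> {}"
  unfolding Lposet_def by auto

lemma Min_eq_iff_Max_reflect_eq:
  assumes "A \<in> Lposet n j" "B \<in> Lposet n j"
  shows "Min A = Min B \<longleftrightarrow> Max (reflect n A) = Max (reflect n B)"
proof -
  have "Min X \<le> n" if "X \<in> Lposet n j" for X
    using Min_in[OF finite_subset[OF Lposet_subset[OF that]] Lposet_nonempty[OF that]] Lposet_subset[OF that]
    by auto
  with assms have "Min A \<le> n" "Min B \<le> n" by blast+
  then show ?thesis
    using Max_reflect[OF Lposet_subset Lposet_nonempty, OF assms(1) assms(1)]
      Max_reflect[OF Lposet_subset Lposet_nonempty, OF assms(2) assms(2)] by auto
qed

lemma functors_extend_reflect:
  assumes j: "j \<le> n"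
    and Q: "\<And>A B. A \<in> Lposet n j \<Longrightarrow> B \<in> Lposet n j \<Longrightarrow> Q A B \<longleftrightarrow> Q' (reflect n A) (reflect n B)"
    and F: "functors_extend C W (Lposet n j - {{0..n}}) (\<subseteq>) (Lposet n j) (\<subseteq>) Q"
  shows "functors_extend C W (Lposet n (n - j) - {{0..n}}) (\<subseteq>) (Lposet n (n - j)) (\<subseteq>) Q'"
proof (rule functors_extend_involution[OF F, where phi = "reflect n"])
  fix A assume A: "A \<in> Lposet n j"
  show "reflect n A \<in> Lposet n (n - j)" by (rule reflect_in_Lposet[OF j A])
  show "reflect n (reflect n A) = A" by (rule reflect_reflect[OF Lposet_subset[OF A]])
  show "A \<in> Lposet n j - {{0..n}} \<longleftrightarrow> reflect n A \<in> Lposet n (n - j) - {{0..n}}"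
    using reflect_in_Lposet[OF j A] reflect_reflect[OF Lposet_subset[OF A]] reflect_atLeastAtMost A by force
next
  fix B assume B: "B \<in> Lposet n (n - j)"
  show "reflect n B \<in> Lposet n j" using reflect_in_Lposet[OF _ B] j by simp
  show "reflect n (reflect n B) = B" by (rule reflect_reflect[OF Lposet_subset[OF B]])
next
  fix A B assume "A \<in> Lposet n j" "B \<in> Lposet n j"
  then show "A \<subseteq> B \<longleftrightarrow> reflect n A \<subseteq> reflect n B"
    using reflect_subset_iff[OF Lposet_subset Lposet_subset] by blast
qed (use Q in auto)

text \<open>Under a \<mapsto> n - a, the R-posets become the L-posets, up to reversing the order, which is
  absorbed by passing to the opposite category.\<close>

lemma functors_extend_R_iff_L_op_cat:
  assumes C: "category C" and kn: "k \<le> n"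
  shows "functors_extend C W (Lposet n k - {{0..n}}) (\<supseteq>) (Lposet n k) (\<supseteq>) (\<lambda>A0 A1. Min A0 = Min A1) \<longleftrightarrow>
    functors_extend (op_cat C) W (Lposet n (n - k) - {{0..n}}) (\<subseteq>) (Lposet n (n - k)) (\<subseteq>) (\<lambda>A0 A1. Max A0 = Max A1)"
proof -
  have "functors_extend C W (Lposet n k - {{0..n}}) (\<supseteq>) (Lposet n k) (\<supseteq>) (\<lambda>A0 A1. Min A0 = Min A1) \<longleftrightarrow>
      functors_extend (op_cat C) W (Lposet n k - {{0..n}}) (\<subseteq>) (Lposet n k) (\<subseteq>) (\<lambda>A0 A1. Min A0 = Min A1)"
    using functors_extend_op_cat_iff[OF C, of W "Lposet n k - {{0..n}}" "(\<supseteq>)" "Lposet n k" "(\<supseteq>)"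
        "\<lambda>A0 A1. Min A0 = Min A1"] by (simp add: eq_commute)
  also have "\<dots> \<longleftrightarrow> functors_extend (op_cat C) W (Lposet n (n - k) - {{0..n}}) (\<subseteq>) (Lposet n (n - k)) (\<subseteq>)
      (\<lambda>A0 A1. Max A0 = Max A1)"
  proof
    assume "functors_extend (op_cat C) W (Lposet n k - {{0..n}}) (\<subseteq>) (Lposet n k) (\<subseteq>) (\<lambda>A0 A1. Min A0 = Min A1)"
    with kn Min_eq_iff_Max_reflect_eq show "functors_extend (op_cat C) W (Lposet n (n - k) - {{0..n}}) (\<subseteq>)
        (Lposet n (n - k)) (\<subseteq>) (\<lambda>A0 A1. Max A0 = Max A1)"
      by (rule functors_extend_reflect)
  next
    assume F: "functors_extend (op_cat C) W (Lposet n (n - k) - {{0..n}}) (\<subseteq>) (Lposet n (n - k)) (\<subseteq>)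
        (\<lambda>A0 A1. Max A0 = Max A1)"
    have "Max A = Max B \<longleftrightarrow> Min (reflect n A) = Min (reflect n B)"
      if "A \<in> Lposet n (n - k)" "B \<in> Lposet n (n - k)" for A B
      using Min_eq_iff_Max_reflect_eq[OF reflect_in_Lposet[OF _ that(1)] reflect_in_Lposet[OF _ that(2)]]
        reflect_reflect[OF Lposet_subset[OF that(1)]] reflect_reflect[OF Lposet_subset[OF that(2)]] by simp
    from functors_extend_reflect[OF _ this F] kn
    show "functors_extend (op_cat C) W (Lposet n k - {{0..n}}) (\<subseteq>) (Lposet n k) (\<subseteq>) (\<lambda>A0 A1. Min A0 = Min A1)"
      by simp
  qed
  finally show ?thesis .
qed

lemma closed_under_Comp_op_cat [simp]: "closed_under_Comp (op_cat C) W \<longleftrightarrow> closed_under_Comp C W"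
  unfolding closed_under_Comp_def by auto

lemma CRF_iff_CLF_op_cat:
  assumes C: "category C" and W: "W \<subseteq> Arr C" "\<forall>x\<in>Obj C. Id C x \<in> W"
  shows "CRF (cnerve C) (nmark C W) \<longleftrightarrow> CLF (cnerve (op_cat C)) (nmark (op_cat C) W)"
proof -
  interpret marked_cat C W using assms by unfold_locales auto
  interpret op: marked_cat "op_cat C" W using category_op_cat[OF C] W by unfold_locales auto
  have R_iff_L: "functors_extend C W (Lposet n k - {{0..n}}) (\<supseteq>) (Lposet n k) (\<supseteq>) (\<lambda>A0 A1. Min A0 = Min A1) \<longleftrightarrow>
      functors_extend (op_cat C) W (Lposet n (n - k) - {{0..n}}) (\<subseteq>) (Lposet n (n - k)) (\<subseteq>)
        (\<lambda>A0 A1. Max A0 = Max A1)" if "k \<le> n" for n k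
    by (rule functors_extend_R_iff_L_op_cat[OF C that])
  have "(\<forall>n k. 2 \<le> n \<longrightarrow> k < n \<longrightarrow>
      functors_extend C W (Lposet n k - {{0..n}}) (\<supseteq>) (Lposet n k) (\<supseteq>) (\<lambda>A0 A1. Min A0 = Min A1)) \<longleftrightarrow>
    (\<forall>n k. 2 \<le> n \<longrightarrow> 0 < k \<longrightarrow> k \<le> n \<longrightarrow>
      functors_extend (op_cat C) W (Lposet n k - {{0..n}}) (\<subseteq>) (Lposet n k) (\<subseteq>) (\<lambda>A0 A1. Max A0 = Max A1))"
  proof (intro iffI allI impI)
    fix n k :: nat assume "2 \<le> n" "0 < k" "k \<le> n" and R: "\<forall>n k. 2 \<le> n \<longrightarrow> k < n \<longrightarrow>
      functors_extend C W (Lposet n k - {{0..n}}) (\<supseteq>) (Lposet n k) (\<supseteq>) (\<lambda>A0 A1. Min A0 = Min A1)"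
    then show "functors_extend (op_cat C) W (Lposet n k - {{0..n}}) (\<subseteq>) (Lposet n k) (\<subseteq>) (\<lambda>A0 A1. Max A0 = Max A1)"
      using R_iff_L[of "n - k" n] by simp
  next
    fix n k :: nat assume "2 \<le> n" "k < n" and L: "\<forall>n k. 2 \<le> n \<longrightarrow> 0 < k \<longrightarrow> k \<le> n \<longrightarrow>
      functors_extend (op_cat C) W (Lposet n k - {{0..n}}) (\<subseteq>) (Lposet n k) (\<subseteq>) (\<lambda>A0 A1. Max A0 = Max A1)"
    then show "functors_extend C W (Lposet n k - {{0..n}}) (\<supseteq>) (Lposet n k) (\<supseteq>) (\<lambda>A0 A1. Min A0 = Min A1)"
      using R_iff_L[of k n] by simp
  qed
  then show ?thesis
    unfolding CRF_iff_functors_extend CLF_iff_functors_extend functors_extend_horn_iff_closed_under_Comp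
      op.functors_extend_horn_iff_closed_under_Comp closed_under_Comp_op_cat
    by blast
qed

theorem theorem5p2:
  fixes C :: "('o, 'a) category" and W :: "'a set"
  assumes "category C"
    and "W \<subseteq> Arr C"
    and "\<forall>x\<in>Obj C. Id C x \<in> W"
  shows "(proper_left_fractions C W \<longleftrightarrow> CLF (cnerve C) (nmark C W)) \<and>
         (proper_right_fractions C W \<longleftrightarrow> CRF (cnerve C) (nmark C W))"
proof
  show "proper_left_fractions C W \<longleftrightarrow> CLF (cnerve C) (nmark C W)"
    by (rule proper_left_fractions_iff_CLF[OF assms])
  have "proper_left_fractions (op_cat C) W \<longleftrightarrow> CLF (cnerve (op_cat C)) (nmark (op_cat C) W)"
    by (rule proper_left_fractions_iff_CLF[OF category_op_cat[OF assms(1)]]) (use assms in auto)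
  then show "proper_right_fractions C W \<longleftrightarrow> CRF (cnerve C) (nmark C W)"
    unfolding proper_right_fractions_def using CRF_iff_CLF_op_cat[OF assms] by simp
qed

end
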